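(* Let $\ell>0$ and let $\gamma\in C^2([0,\ell];\mathbb R^2)$ be a closed curve parametrized by arclength, of length $\ell$, with $\partial_s\gamma(0)=\partial_s\gamma(\ell)$, $\partial_s^2\gamma(0)=\partial_s^2\gamma(\ell)$ and curvature $\kappa_\gamma$. For $\epsilon\in(0,1]$ let $\gamma_\epsilon\in H^2([0,\ell];\mathbb R^2)$ be closed curves parametrized by arclength of length $\ell$ with $\gamma_\epsilon(0)=\gamma_\epsilon(\ell)$, $\partial_s\gamma_\epsilon(0)=\partial_s\gamma_\epsilon(\ell)$, curvature $\kappa_{\gamma_\epsilon}$, and assume there is $C>0$ with $$\epsilon^{1/2}\int_0^\ell\kappa_{\gamma_\epsilon}^2\,ds\le C,\qquad\int_0^\ell|\partial_s\gamma_\epsilon-\partial_s\gamma|^2\,ds\le C\epsilon^{1/2}.$$ Then there exist a subsequence $\epsilon_k\to0^+$ and $\omega\in M_{\mathrm{fin},\mathbb Z}([0,\ell])$ such that $$\lim_{k\to\infty}\|(\kappa_{\gamma_{\epsilon_k}}-\kappa_\gamma)-\omega\|_{\mathrm{flat},[0,\ell]}=0,$$ equivalently $\kappa_{\gamma_{\epsilon_k}}\to\kappa_\gamma\,ds+\omega$ in the flat norm.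
   Context: Curvatures are signed: $\kappa_{\gamma_\epsilon}=\partial_s\theta_\epsilon$ where $\partial_s\gamma_\epsilon=(\cos\theta_\epsilon,\sin\theta_\epsilon)$, and they are identified with measures $\kappa\,ds$. $M_{\mathrm{fin},\mathbb Z}([0,\ell])$ is the set of measures $2\pi\sum_{j=1}^Nc_j\delta_{s_j}$ with $c_j\in\mathbb Z$, $0\le s_1<\dots<s_N\le\ell$. The flat norm is $\|\nu\|_{\mathrm{flat},[0,\ell]}=\sup\{\int\psi\,d\nu:\psi\in C^{0,1}([0,\ell]),\ \|\psi\|_{L^\infty}+\mathrm{Lip}(\psi)\le1,\ \psi(0)=\psi(\ell)\}$. *)

theory Defs
  imports "HOL-Analysis.Analysis"
begin

text \<open>The curvature is determined only almost everywhere, which is all that matters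
  when it is identified with the measure kappa ds.\<close>
definition curvature_of :: "real \<Rightarrow> (real \<Rightarrow> real^2) \<Rightarrow> (real \<Rightarrow> real) \<Rightarrow> bool" where
  "curvature_of l dgamma kappa \<longleftrightarrow>
     kappa absolutely_integrable_on {0..l} \<and>
     (\<exists>theta. \<forall>s\<in>{0..l}. dgamma s = vector [cos (theta s), sin (theta s)] \<and>
                          theta s = theta 0 + integral {0..s} kappa)"

text \<open>M_fin,Z([0,l]): measures 2 pi sum_j c_j delta_{s_j}, c_j integers, s_j in [0,l];
  represented by the finitely supported integer weight function c.\<close>
definition Mfin_Z :: "real \<Rightarrow> (real \<Rightarrow> int) set" where
  "Mfin_Z l = {c. finite {x. c x \<noteq> 0} \<and> {x. c x \<noteq> 0} \<subseteq> {0..l}}"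

definition flat_admissible :: "real \<Rightarrow> (real \<Rightarrow> real) \<Rightarrow> bool" where
  "flat_admissible l psi \<longleftrightarrow>
     (\<exists>M L. (\<forall>s\<in>{0..l}. \<bar>psi s\<bar> \<le> M) \<and> L-lipschitz_on {0..l} psi \<and> M + L \<le> 1) \<and>
     psi 0 = psi l"

definition pairing :: "real \<Rightarrow> (real \<Rightarrow> real) \<Rightarrow> (real \<Rightarrow> int) \<Rightarrow> (real \<Rightarrow> real) \<Rightarrow> real" where
  "pairing l f c psi = integral {0..l} (\<lambda>s. psi s * f s) +
      2 * pi * (\<Sum>x\<in>{x. c x \<noteq> 0}. of_int (c x) * psi x)"

definition flat_norm :: "real \<Rightarrow> (real \<Rightarrow> real) \<Rightarrow> (real \<Rightarrow> int) \<Rightarrow> real" where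
  "flat_norm l f c = (SUP psi\<in>{psi. flat_admissible l psi}. pairing l f c psi)"

end

theory Submission
  imports Defs
begin

(* Write the tangents as (cos theta, sin theta) and (cos theta_e, sin theta_e) and let
   phi = theta_e - theta, so that phi' = kappa_e - kappa and |dgamma_e - dgamma|^2 = 4 sin^2 (phi/2).
   By AM-GM the two hypotheses bound the Modica-Mortola type energy int |phi'| |sin (phi/2)|
   uniformly in e, while int sin^2 (phi/2) = O(sqrt e). Every passage of phi from one multiple
   of 2 pi to the next costs a fixed amount of this energy. Hence on a fine grid of points where
   phi is close to 2 pi Z, the nearest multiples of 2 pi jump by integers of uniformly bounded
   total size, and summation by parts against 1-Lipschitz test functions shows that
   (kappa_e - kappa) ds is flat-close to 2 pi times these jumps placed at the grid points.
   Boundedly many atoms with bounded integer weights converge along a subsequence. *)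

lemma abs_sin_add_of_int_mult_pi: "\<bar>sin (x + of_int k * pi)\<bar> = \<bar>sin x\<bar>"
proof -
  have s: "sin (of_int k * pi) = 0"
    using sin_times_pi_eq_0[of "of_int k"] by simp
  have "(cos (of_int k * pi))\<^sup>2 = 1"
    using s sin_cos_squared_add[of "of_int k * pi"] by simp
  then have c: "\<bar>cos (of_int k * pi)\<bar> = 1"
    by (metis abs_power2 abs_le_zero_iff power2_eq_1_iff zero_le_one abs_minus_cancel abs_one)
  show ?thesis by (simp add: sin_add s abs_mult c)
qed

lemma abs_sin_half_ge_half:
  assumes "2*pi * of_int p + pi/3 \<le> x" "x \<le> 2*pi * of_int p + 5*pi/3"
  shows "1/2 \<le> \<bar>sin (x/2)\<bar>"
proof -
  define y where "y = x/2 - of_int p * pi"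
  have y: "pi/6 \<le> y" "y \<le> 5*pi/6"
    using assms by (auto simp: y_def field_simps)
  have "\<bar>sin (x/2)\<bar> = \<bar>sin (y + of_int p * pi)\<bar>"
    by (simp add: y_def)
  also have "\<dots> = \<bar>sin y\<bar>"
    by (rule abs_sin_add_of_int_mult_pi)
  finally have e: "\<bar>sin (x/2)\<bar> = \<bar>sin y\<bar>" .
  have "1/2 \<le> sin y"
  proof (cases "y \<le> pi/2")
    case True
    then show ?thesis using sin_monotone_2pi_le[of "pi/6" y] y sin_30 by auto
  next
    case False
    then have "sin (pi/6) \<le> sin (pi - y)"
      using y by (intro sin_monotone_2pi_le) auto
    then show ?thesis using sin_30 by simp
  qed
  then show ?thesis using e by simp
qed

lemma sin_ge_quarter:
  fixes z :: real
  assumes "0 \<le> z" "z \<le> pi/2"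
  shows "z/4 \<le> sin z"
proof (cases "z \<le> 1")
  case True
  have "\<bar>sin z - (\<Sum>m<3. sin_coeff m * z ^ m)\<bar> \<le> inverse (fact 3) * \<bar>z\<bar> ^ 3"
    by (rule Maclaurin_sin_bound)
  then have "\<bar>sin z - z\<bar> \<le> z^3/6"
    using assms by (simp add: sin_coeff_def eval_nat_numeral fact_numeral)
  moreover have "z^3 \<le> z"
  proof -
    have "z*z \<le> 1" using True assms by (simp add: mult_le_one)
    then have "z*z*z \<le> 1*z" using assms by (intro mult_right_mono) auto
    then show ?thesis by (simp add: power3_eq_cube)
  qed
  ultimately show ?thesis using assms by linarith
next
  case False
  have "sin 1 \<le> sin z"
    using False assms by (intro sin_monotone_2pi_le) auto
  moreover have "\<bar>sin 1 - (\<Sum>m<3. sin_coeff m * 1 ^ m)\<bar> \<le> inverse (fact 3) * \<bar>1::real\<bar> ^ 3"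
    by (rule Maclaurin_sin_bound)
  then have "1/2 \<le> sin (1::real)"
    by (simp add: sin_coeff_def eval_nat_numeral fact_numeral)
  moreover have "z/4 \<le> 1/2"
    using assms pi_less_4 by simp
  ultimately show ?thesis by linarith
qed

lemma dist_2pi_round_le_abs_sin_half:
  fixes x :: real
  shows "\<bar>x - 2*pi * of_int (round (x/(2*pi)))\<bar> \<le> 8 * \<bar>sin (x/2)\<bar>"
proof -
  define k where "k = round (x/(2*pi))"
  define y where "y = x/2 - of_int k * pi"
  have "\<bar>x/(2*pi) - of_int k\<bar> \<le> 1/2"
    unfolding k_def using of_int_round_abs_le[of "x/(2*pi)"] by linarith
  moreover have "\<bar>y\<bar> = pi * \<bar>x/(2*pi) - of_int k\<bar>"
    by (simp add: y_def abs_mult[symmetric] field_simps)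
  ultimately have y_le: "\<bar>y\<bar> \<le> pi/2"
    by (simp add: mult_left_le[of _ pi, simplified])
  have "\<bar>sin (x/2)\<bar> = \<bar>sin (y + of_int k * pi)\<bar>"
    by (simp add: y_def)
  also have "\<dots> = \<bar>sin y\<bar>"
    by (rule abs_sin_add_of_int_mult_pi)
  finally have e: "\<bar>sin (x/2)\<bar> = \<bar>sin y\<bar>" .
  have "\<bar>y\<bar> \<le> 4 * \<bar>sin y\<bar>"
    using sin_ge_quarter[of "\<bar>y\<bar>"] y_le by (cases "0 \<le> y") auto
  moreover have "\<bar>x - 2*pi * of_int k\<bar> = 2 * \<bar>y\<bar>"
    by (simp add: y_def abs_mult[symmetric] field_simps)
  ultimately show ?thesis using e k_def by simp
qed

lemma norm_cis_vector_diff_sq: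
  "(norm (vector [cos a, sin a] - vector [cos b, sin b] :: real^2))\<^sup>2 = 4 * (sin ((a - b)/2))\<^sup>2"
proof -
  have "(norm (vector [cos a, sin a] - vector [cos b, sin b] :: real^2))\<^sup>2
      = (cos a - cos b)\<^sup>2 + (sin a - sin b)\<^sup>2"
    unfolding power2_norm_eq_inner by (simp add: inner_vec_def sum_2 power2_eq_square)
  also have "\<dots> = 2 - 2 * cos (a - b)"
    using sin_cos_squared_add[of a] sin_cos_squared_add[of b]
    by (simp add: cos_diff power2_eq_square algebra_simps)
  also have "cos (a - b) = 1 - 2 * (sin ((a - b)/2))\<^sup>2"
  proof -
    have "a - b = 2 * ((a - b)/2)" by simp
    then show ?thesis using cos_double_sin[of "(a - b)/2"] by metis
  qed
  finally show ?thesis by simp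
qed

lemma cis_vector_eq_imp_2pi_multiple:
  assumes "vector [cos a, sin a] = (vector [cos b, sin b] :: real^2)"
  shows "\<exists>m::int. a = b + 2*pi * of_int m"
proof -
  have "cos a = cos b" "sin a = sin b"
    using arg_cong[OF assms, of "\<lambda>v. v$1"] arg_cong[OF assms, of "\<lambda>v. v$2"] by auto
  then show ?thesis using sin_cos_eq_iff by blast
qed

lemma abs_mult_le_weighted_squares:
  fixes x y t :: real
  assumes "0 < t"
  shows "\<bar>x\<bar> * \<bar>y\<bar> \<le> (x\<^sup>2 / t + t * y\<^sup>2) / 2"
proof -
  have "0 \<le> (\<bar>x\<bar> - t * \<bar>y\<bar>)\<^sup>2" by simp
  then have "2 * t * (\<bar>x\<bar> * \<bar>y\<bar>) \<le> x\<^sup>2 + t\<^sup>2 * y\<^sup>2"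
    by (simp add: power2_eq_square algebra_simps)
  then show ?thesis using assms by (simp add: field_simps power2_eq_square)
qed

lemma divide_power_le_divide:
  fixes A :: real and n :: nat
  assumes "0 \<le> A" "1 \<le> n" "1 \<le> j"
  shows "A / real n ^ j \<le> A / real n"
proof -
  have "real n ^ 1 \<le> real n ^ j" using assms by (intro power_increasing) auto
  then show ?thesis using assms by (intro divide_left_mono) auto
qed

lemma scaled_error_le:
  fixes n :: nat
  assumes "1 \<le> n" "0 < l" "0 < C" "0 \<le> K"
  shows "2*(l / real (n ^ 9))*((C + l) * real n ^ 6 / 2 + K) + 2*(l / real (n ^ 9))*(3*(C + K) + 2*pi)
           + 8*(1 / (8 * real n))*l
         \<le> (l*(C + l) + 2*l*K + 2*l*(3*(C + K) + 2*pi) + l) / real n"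
proof -
  have "2*(l / real (n ^ 9))*((C + l) * real n ^ 6 / 2 + K) = l*(C + l) / real n ^ 3 + 2*l*K / real n ^ 9"
    using assms(1) by (simp add: field_simps eval_nat_numeral)
  also have "\<dots> \<le> l*(C + l) / real n + 2*l*K / real n"
    using assms by (intro add_mono divide_power_le_divide) auto
  finally have "2*(l / real (n ^ 9))*((C + l) * real n ^ 6 / 2 + K) + 2*(l / real (n ^ 9))*(3*(C + K) + 2*pi)
        + 8*(1 / (8 * real n))*l
      \<le> l*(C + l) / real n + 2*l*K / real n + 2*l*(3*(C + K) + 2*pi) / real n + l / real n"
    using divide_power_le_divide[of "2*l*(3*(C + K) + 2*pi)" n 9] assms pi_gt_zero by simp
  also have "\<dots> = (l*(C + l) + 2*l*K + 2*l*(3*(C + K) + 2*pi) + l) / real n"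
    by (simp add: add_divide_distrib)
  finally show ?thesis .
qed

lemma absolutely_integrable_continuous_mult:
  fixes f g :: "real \<Rightarrow> real"
  assumes "continuous_on {a..b} f" "g absolutely_integrable_on {a..b}"
  shows "(\<lambda>x. f x * g x) absolutely_integrable_on {a..b}"
proof (rule absolutely_integrable_bounded_measurable_product_real)
  show "f \<in> borel_measurable (lebesgue_on {a..b})"
    using assms(1) by (rule continuous_imp_measurable_on_sets_lebesgue) simp
  show "bounded (f ` {a..b})"
    using assms(1) by (intro compact_imp_bounded compact_continuous_image) auto
qed (use assms in auto)

lemma sum_integrals_partition:
  fixes t :: "nat \<Rightarrow> real" and f :: "real \<Rightarrow> real"
  assumes "mono t" and "f integrable_on {t 0..t K}"
  shows "(\<Sum>i<K. integral {t i..t (Suc i)} f) = integral {t 0..t K} f"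
  using assms(2)
proof (induction K)
  case (Suc K)
  have le: "t 0 \<le> t K" "t K \<le> t (Suc K)"
    using \<open>mono t\<close> by (auto simp: monoD)
  have "f integrable_on {t 0..t K}"
    using Suc.prems by (rule integrable_subinterval_real) (use le in auto)
  then have "(\<Sum>i<Suc K. integral {t i..t (Suc i)} f)
      = integral {t 0..t K} f + integral {t K..t (Suc K)} f"
    using Suc.IH by simp
  also have "\<dots> = integral {t 0..t (Suc K)} f"
    by (rule Henstock_Kurzweil_Integration.integral_combine[OF le Suc.prems])
  finally show ?case .
qed simp

lemma sum_mult_diff_by_parts:
  fixes a u :: "nat \<Rightarrow> real"
  shows "(\<Sum>i<n. a i * (u (Suc i) - u i))
       = a n * u n - a 0 * u 0 - (\<Sum>i<n. u (Suc i) * (a (Suc i) - a i))"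
  by (induction n) (simp_all add: algebra_simps)

lemma sum_mult_diff_by_parts_periodic:
  fixes a u v :: "nat \<Rightarrow> real"
  assumes "a (Suc N) = a 0" "v 0 = v N - u (Suc N) + u 0"
  shows "(\<Sum>i<Suc N. a i * (u (Suc i) - u i)) - (\<Sum>i<N. a i * (v (Suc i) - v i))
       = (a 0 - a N) * (v N - u (Suc N)) - (\<Sum>i<N. (u (Suc i) - v (Suc i)) * (a (Suc i) - a i))"
  unfolding sum_mult_diff_by_parts assms(2)
  by (simp add: algebra_simps sum_subtractf sum.distrib assms(1))

lemma integral_abs_mult_le_weighted_squares:
  fixes f g k w :: "real \<Rightarrow> real"
  assumes "0 < T" and g_le: "\<forall>s\<in>{a..b}. \<bar>g s\<bar> \<le> \<bar>f s\<bar> + \<bar>k s\<bar>" and w_le: "\<forall>s\<in>{a..b}. \<bar>w s\<bar> \<le> 1"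
    and int: "(\<lambda>s. \<bar>g s\<bar> * \<bar>w s\<bar>) integrable_on {a..b}" "(\<lambda>s. (f s)\<^sup>2) integrable_on {a..b}"
      "(\<lambda>s. (w s)\<^sup>2) integrable_on {a..b}" "(\<lambda>s. \<bar>k s\<bar>) integrable_on {a..b}"
  shows "integral {a..b} (\<lambda>s. \<bar>g s\<bar> * \<bar>w s\<bar>)
           \<le> (integral {a..b} (\<lambda>s. (f s)\<^sup>2) / T + T * integral {a..b} (\<lambda>s. (w s)\<^sup>2)) / 2
              + integral {a..b} (\<lambda>s. \<bar>k s\<bar>)"
proof -
  have "integral {a..b} (\<lambda>s. \<bar>g s\<bar> * \<bar>w s\<bar>)
      \<le> integral {a..b} (\<lambda>s. ((f s)\<^sup>2 / T + T * (w s)\<^sup>2) / 2 + \<bar>k s\<bar>)"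
  proof (rule integral_le)
    show "(\<lambda>s. ((f s)\<^sup>2 / T + T * (w s)\<^sup>2) / 2 + \<bar>k s\<bar>) integrable_on {a..b}"
      using int by (intro integrable_add integrable_on_divide integrable_on_mult_right) auto
    fix s assume s: "s \<in> {a..b}"
    have "\<bar>g s\<bar> * \<bar>w s\<bar> \<le> \<bar>f s\<bar> * \<bar>w s\<bar> + \<bar>k s\<bar> * \<bar>w s\<bar>"
      using g_le s by (simp add: distrib_right[symmetric] mult_right_mono)
    moreover have "\<bar>k s\<bar> * \<bar>w s\<bar> \<le> \<bar>k s\<bar>"
      using w_le s by (simp add: mult_left_le)
    ultimately show "\<bar>g s\<bar> * \<bar>w s\<bar> \<le> ((f s)\<^sup>2 / T + T * (w s)\<^sup>2) / 2 + \<bar>k s\<bar>"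
      using abs_mult_le_weighted_squares[OF \<open>0 < T\<close>, of "f s" "w s"] by linarith
  qed (use int in auto)
  also have "\<dots> = (integral {a..b} (\<lambda>s. (f s)\<^sup>2) / T + T * integral {a..b} (\<lambda>s. (w s)\<^sup>2)) / 2
      + integral {a..b} (\<lambda>s. \<bar>k s\<bar>)"
    using int by (simp add: integral_add integral_divide integrable_on_divide integrable_add
        integrable_on_mult_right add_divide_distrib)
  finally show ?thesis .
qed

section \<open>Test functions and the flat norm\<close>

lemma flat_admissible_lipschitz:
  assumes "flat_admissible l \<psi>" "0 \<le> l"
  shows "1-lipschitz_on {0..l} \<psi>"
proof -
  obtain M L where bounds: "\<forall>s\<in>{0..l}. \<bar>\<psi> s\<bar> \<le> M" "L-lipschitz_on {0..l} \<psi>" "M + L \<le> 1"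
    using assms(1) unfolding flat_admissible_def by blast
  have "0 \<le> M" using bounds(1) assms(2) by fastforce
  show ?thesis
    using bounds(2) by (rule lipschitz_on_le) (use bounds(3) \<open>0 \<le> M\<close> in linarith)
qed

lemma flat_admissible_zero: "flat_admissible l (\<lambda>_. 0)"
  unfolding flat_admissible_def lipschitz_on_def
  by (rule conjI, rule exI[of _ 0], rule exI[of _ 0]) auto

lemma flat_norm_bounds:
  assumes "\<And>\<psi>. flat_admissible l \<psi> \<Longrightarrow> pairing l f c \<psi> \<le> \<beta>"
  shows "0 \<le> flat_norm l f c" and "flat_norm l f c \<le> \<beta>"
proof -
  have bdd: "bdd_above ((\<lambda>\<psi>. pairing l f c \<psi>) ` {\<psi>. flat_admissible l \<psi>})"
    using assms by (auto intro!: bdd_aboveI)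
  have "pairing l f c (\<lambda>_. 0) \<le> flat_norm l f c"
    unfolding flat_norm_def by (rule cSUP_upper[OF _ bdd]) (simp add: flat_admissible_zero)
  then show "0 \<le> flat_norm l f c" by (simp add: pairing_def)
  show "flat_norm l f c \<le> \<beta>"
    unfolding flat_norm_def by (rule cSUP_least) (use flat_admissible_zero assms in auto)
qed

lemma sum_mult_lipschitz_increments_le:
  fixes t x :: "nat \<Rightarrow> real" and f :: "real \<Rightarrow> real"
  assumes f: "1-lipschitz_on X f" and t: "\<forall>i\<le>N. t i \<in> X" "\<forall>i<N. t i \<le> t (Suc i)"
    and x: "\<forall>i<N. \<bar>x i\<bar> \<le> \<eta>"
  shows "\<bar>\<Sum>i<N. x i * (f (t (Suc i)) - f (t i))\<bar> \<le> \<eta> * (t N - t 0)"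
proof -
  have "\<bar>\<Sum>i<N. x i * (f (t (Suc i)) - f (t i))\<bar> \<le> (\<Sum>i<N. \<bar>x i * (f (t (Suc i)) - f (t i))\<bar>)"
    by (rule sum_abs)
  also have "\<dots> \<le> (\<Sum>i<N. \<eta> * (t (Suc i) - t i))"
  proof (rule sum_mono)
    fix i assume "i \<in> {..<N}"
    then have "\<bar>f (t (Suc i)) - f (t i)\<bar> \<le> t (Suc i) - t i" "\<bar>x i\<bar> \<le> \<eta>"
      using lipschitz_onD[OF f, of "t (Suc i)" "t i"] t x by (auto simp: dist_real_def)
    then show "\<bar>x i * (f (t (Suc i)) - f (t i))\<bar> \<le> \<eta> * (t (Suc i) - t i)"
      unfolding abs_mult by (intro mult_mono) auto
  qed
  also have "\<dots> = \<eta> * (t N - t 0)"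
    by (simp add: sum_distrib_left[symmetric] sum_lessThan_telescope)
  finally show ?thesis .
qed

section \<open>Crossing energy of a phase\<close>

lemma continuous_first_reach:
  fixes f :: "real \<Rightarrow> real"
  assumes "a \<le> b" "continuous_on {a..b} f" "f a \<le> c" "c \<le> f b"
  shows "\<exists>b'. a \<le> b' \<and> b' \<le> b \<and> f b' = c \<and> (\<forall>s\<in>{a..b'}. f s \<le> c)"
proof -
  define T where "T = {a..b} \<inter> f -` {c..}"
  have T_closed: "closed T" unfolding T_def by (intro continuous_closed_preimage assms) auto
  have T_bdd: "bdd_below T" unfolding T_def by (rule bdd_belowI[of _ a]) auto
  have "b \<in> T" using assms by (auto simp: T_def)
  define b' where "b' = Inf T"
  have "b' \<in> T" unfolding b'_def using T_closed T_bdd \<open>b \<in> T\<close> by (intro closed_contains_Inf) auto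
  then have b': "a \<le> b'" "b' \<le> b" "c \<le> f b'" by (auto simp: T_def)
  have b'_le: "\<And>s. s \<in> T \<Longrightarrow> b' \<le> s" unfolding b'_def using T_bdd by (rule cInf_lower[rotated])
  have "continuous_on {a..b'} f" using assms(2) by (rule continuous_on_subset) (use b' in auto)
  then obtain x where "a \<le> x" "x \<le> b'" "f x = c"
    using IVT'[of f a c b'] assms(3) b' by auto
  then have "x \<in> T" using b' by (auto simp: T_def)
  then have fb': "f b' = c" using b'_le \<open>x \<le> b'\<close> \<open>f x = c\<close> by force
  have "f s \<le> c" if "s \<in> {a..b'}" for s
  proof (cases "s = b'")
    case False
    then have "s \<notin> T" using b'_le that by force
    then show ?thesis using that b' by (auto simp: T_def)
  qed (use fb' in simp)
  then show ?thesis using b' fb' by blast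
qed

lemma continuous_last_leave:
  fixes f :: "real \<Rightarrow> real"
  assumes "a \<le> b" "continuous_on {a..b} f" "f a \<le> c" "c \<le> f b"
  shows "\<exists>a'. a \<le> a' \<and> a' \<le> b \<and> f a' = c \<and> (\<forall>s\<in>{a'..b}. c \<le> f s)"
proof -
  have "continuous_on {-b..-a} (\<lambda>s. - f (- s))"
    by (intro continuous_intros continuous_on_compose2[OF assms(2)]) auto
  then obtain b' where b': "-b \<le> b'" "b' \<le> -a" "f (- b') = c" and below: "\<forall>s\<in>{-b..b'}. c \<le> f (- s)"
    using continuous_first_reach[of "-b" "-a" "\<lambda>s. - f (- s)" "- c"] assms by auto
  have "c \<le> f s" if "s \<in> {- b'..b}" for s
    using below[rule_format, of "- s"] that by auto
  then show ?thesis using b' by (intro exI[of _ "- b'"]) auto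
qed

lemma continuous_crossing_subinterval:
  fixes f :: "real \<Rightarrow> real"
  assumes "a \<le> b" "continuous_on {a..b} f" "f a \<le> c" "c < c'" "c' \<le> f b"
  shows "\<exists>a' b'. a \<le> a' \<and> a' \<le> b' \<and> b' \<le> b \<and> f a' = c \<and> f b' = c' \<and>
           (\<forall>s\<in>{a'..b'}. c \<le> f s \<and> f s \<le> c')"
proof -
  obtain b' where b': "a \<le> b'" "b' \<le> b" "f b' = c'" "\<forall>s\<in>{a..b'}. f s \<le> c'"
    using continuous_first_reach[OF assms(1,2), of c'] assms(3-5) by auto
  moreover have "continuous_on {a..b'} f" using assms(2) by (rule continuous_on_subset) (use b' in auto)
  ultimately obtain a' where a': "a \<le> a'" "a' \<le> b'" "f a' = c" "\<forall>s\<in>{a'..b'}. c \<le> f s"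
    using continuous_last_leave[of a b' f c] assms(3,4) by force
  show ?thesis using a' b' by (intro exI[of _ a'] exI[of _ b']) auto
qed

text \<open>In the application \<open>phi\<close> is the angle between the tangents of the two curves and \<open>g\<close> the
  difference of their curvatures. The energy is of Modica--Mortola type: \<open>\<bar>sin (phi/2)\<bar>\<close> vanishes
  exactly on \<open>2 pi \<int>\<close>, so every passage of \<open>phi\<close> from one multiple of \<open>2 pi\<close> to the next
  costs energy at least \<open>2 pi / 3\<close>.\<close>

locale phase =
  fixes l :: real and g phi :: "real \<Rightarrow> real"
  assumes l_pos: "0 < l"
    and g_absolutely_integrable: "g absolutely_integrable_on {0..l}"
    and phi_eq: "\<forall>s\<in>{0..l}. phi s = phi 0 + integral {0..s} g"
begin

definition energy_density :: "real \<Rightarrow> real" where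
  "energy_density s = \<bar>g s\<bar> * \<bar>sin (phi s / 2)\<bar>"

definition energy :: "real \<Rightarrow> real \<Rightarrow> real" where
  "energy x y = integral {x..y} energy_density"

lemma g_integrable_on: "0 \<le> x \<Longrightarrow> y \<le> l \<Longrightarrow> g integrable_on {x..y}"
  using set_lebesgue_integral_eq_integral(1)[OF g_absolutely_integrable]
  by (rule integrable_subinterval_real) auto

lemma abs_g_absolutely_integrable: "(\<lambda>s. \<bar>g s\<bar>) absolutely_integrable_on {0..l}"
  using g_absolutely_integrable
  by (intro abs_absolutely_integrableI_1) (auto simp: absolutely_integrable_on_def)

lemma abs_g_integrable_on:
  assumes "0 \<le> x" "y \<le> l"
  shows "(\<lambda>s. \<bar>g s\<bar>) integrable_on {x..y}"
proof -
  have "(\<lambda>s. \<bar>g s\<bar>) integrable_on {0..l}"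
    using g_absolutely_integrable by (simp add: absolutely_integrable_on_def)
  then show ?thesis by (rule integrable_subinterval_real) (use assms in auto)
qed

lemma phi_diff:
  assumes "0 \<le> x" "x \<le> y" "y \<le> l"
  shows "phi y - phi x = integral {x..y} g"
proof -
  have "integral {0..x} g + integral {x..y} g = integral {0..y} g"
    using assms by (intro Henstock_Kurzweil_Integration.integral_combine g_integrable_on) auto
  moreover have "phi x = phi 0 + integral {0..x} g" "phi y = phi 0 + integral {0..y} g"
    using assms by (auto intro!: bspec[OF phi_eq])
  ultimately show ?thesis by linarith
qed

lemma continuous_on_phi: "continuous_on {0..l} phi"
proof -
  have "continuous_on {0..l} (\<lambda>s. phi 0 + integral {0..s} g)"
    using g_integrable_on[of 0 l] by (intro continuous_intros indefinite_integral_continuous_1) simp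
  then show ?thesis using phi_eq by (metis (no_types, lifting) continuous_on_cong)
qed

lemma energy_density_integrable_on: "0 \<le> x \<Longrightarrow> y \<le> l \<Longrightarrow> energy_density integrable_on {x..y}"
proof -
  assume xy: "0 \<le> x" "y \<le> l"
  have "continuous_on {0..l} (\<lambda>s. \<bar>sin (phi s / 2)\<bar>)"
    by (intro continuous_intros continuous_on_phi) auto
  then have "(\<lambda>s. \<bar>sin (phi s / 2)\<bar> * \<bar>g s\<bar>) absolutely_integrable_on {0..l}"
    using abs_g_absolutely_integrable by (rule absolutely_integrable_continuous_mult)
  then have "energy_density integrable_on {0..l}"
    unfolding energy_density_def absolutely_integrable_on_def by (simp add: mult.commute)
  then show ?thesis by (rule integrable_subinterval_real) (use xy in auto)
qed

lemma energy_density_nonneg: "0 \<le> energy_density s"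
  by (simp add: energy_density_def)

lemma energy_nonneg: "0 \<le> x \<Longrightarrow> y \<le> l \<Longrightarrow> 0 \<le> energy x y"
  unfolding energy_def
  by (rule integral_nonneg) (auto simp: energy_density_nonneg energy_density_integrable_on)

lemma energy_add: "0 \<le> x \<Longrightarrow> x \<le> y \<Longrightarrow> y \<le> z \<Longrightarrow> z \<le> l \<Longrightarrow> energy x y + energy y z = energy x z"
  unfolding energy_def
  by (intro Henstock_Kurzweil_Integration.integral_combine energy_density_integrable_on) auto

lemma energy_mono:
  "0 \<le> x' \<Longrightarrow> x' \<le> x \<Longrightarrow> x \<le> y \<Longrightarrow> y \<le> y' \<Longrightarrow> y' \<le> l \<Longrightarrow> energy x y \<le> energy x' y'"
  unfolding energy_def
  by (intro integral_subset_le energy_density_integrable_on) (auto simp: energy_density_nonneg)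

lemma energy_ge_band_crossing:
  assumes "0 \<le> a" "a \<le> b" "b \<le> l" "phi a \<le> c" "c < c'" "c' \<le> phi b"
    and band: "\<And>x. c \<le> x \<Longrightarrow> x \<le> c' \<Longrightarrow> 1/2 \<le> \<bar>sin (x/2)\<bar>"
  shows "(c' - c)/2 \<le> energy a b"
proof -
  have "continuous_on {a..b} phi"
    using continuous_on_phi by (rule continuous_on_subset) (use assms in auto)
  then obtain a' b' where ab': "a \<le> a'" "a' \<le> b'" "b' \<le> b" "phi a' = c" "phi b' = c'"
    and inside: "\<forall>s\<in>{a'..b'}. c \<le> phi s \<and> phi s \<le> c'"
    using continuous_crossing_subinterval[of a b phi c c'] assms by blast
  have sub: "0 \<le> a'" "b' \<le> l" using assms ab' by auto
  have "c' - c = integral {a'..b'} g"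
    using phi_diff[of a' b'] sub ab' by simp
  also have "\<dots> \<le> integral {a'..b'} (\<lambda>s. \<bar>g s\<bar>)"
    by (rule integral_le) (use g_integrable_on abs_g_integrable_on sub in auto)
  also have "\<dots> \<le> integral {a'..b'} (\<lambda>s. 2 * energy_density s)"
  proof (rule integral_le)
    fix s assume "s \<in> {a'..b'}"
    then have "1/2 \<le> \<bar>sin (phi s / 2)\<bar>" using inside band by auto
    then have "\<bar>g s\<bar> * (1/2) \<le> \<bar>g s\<bar> * \<bar>sin (phi s / 2)\<bar>" by (intro mult_left_mono) auto
    then show "\<bar>g s\<bar> \<le> 2 * energy_density s" by (simp add: energy_density_def)
  qed (use abs_g_integrable_on energy_density_integrable_on sub in auto)
  also have "\<dots> = 2 * energy a' b'" by (simp add: energy_def)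
  also have "\<dots> \<le> 2 * energy a b" using energy_mono[of a a' b' b] assms ab' by auto
  finally show ?thesis by simp
qed

lemma energy_ge_band_crossings:
  "0 \<le> a \<Longrightarrow> a \<le> b \<Longrightarrow> b \<le> l \<Longrightarrow> phi a \<le> 2*pi * of_int k + pi/3 \<Longrightarrow>
     2*pi * (of_int k + of_nat j + 1) - pi/3 \<le> phi b \<Longrightarrow> 2*pi/3 * (of_nat j + 1) \<le> energy a b"
proof (induction j arbitrary: a k)
  case 0
  have "((2*pi * (of_int k + 1) - pi/3) - (2*pi * of_int k + pi/3))/2 \<le> energy a b"
    by (rule energy_ge_band_crossing[OF 0(1-4)])
      (use 0(5) abs_sin_half_ge_half[of k] in \<open>auto simp: algebra_simps\<close>)
  then show ?case by (simp add: algebra_simps)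
next
  case (Suc j)
  have "continuous_on {a..b} phi"
    using continuous_on_phi by (rule continuous_on_subset) (use Suc in auto)
  moreover have "phi a \<le> 2*pi * (of_int k + 1) + pi/3"
  proof -
    have "2*pi * (of_int k + 1) + pi/3 = 2*pi * of_int k + pi/3 + 2*pi"
      by (simp add: algebra_simps)
    then show ?thesis using Suc.prems(4) pi_gt_zero by linarith
  qed
  moreover have "2*pi * (of_int k + 1) + pi/3 \<le> phi b"
  proof -
    have "2*pi * (of_int k + of_nat (Suc j) + 1) - pi/3
        = 2*pi * (of_int k + 1) + pi/3 + (2*pi * of_nat j + 4*pi/3)"
      by (simp add: algebra_simps)
    moreover have "0 \<le> 2*pi * of_nat j" by simp
    ultimately show ?thesis using Suc.prems(5) pi_gt_zero by linarith
  qed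
  ultimately obtain x where x: "a \<le> x" "x \<le> b" "phi x = 2*pi * (of_int k + 1) + pi/3"
    using IVT'[of phi a _ b] Suc.prems(2) by blast
  have "((2*pi * (of_int k + 1) - pi/3) - (2*pi * of_int k + pi/3))/2 \<le> energy a x"
    by (rule energy_ge_band_crossing)
      (use Suc.prems x abs_sin_half_ge_half[of k] in \<open>auto simp: algebra_simps\<close>)
  moreover have "2*pi/3 * (of_nat j + 1) \<le> energy x b"
    using Suc.IH[of x "k + 1"] Suc.prems x by (auto simp: algebra_simps)
  moreover have "energy a b = energy a x + energy x b"
    using energy_add[of a x b] Suc.prems x by auto
  ultimately show ?case by (simp add: algebra_simps)
qed

lemma phase_uminus: "phase l (\<lambda>s. - g s) (\<lambda>s. - phi s)"
proof
  show "(\<lambda>s. - g s) absolutely_integrable_on {0..l}"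
    using g_absolutely_integrable by (simp add: absolutely_integrable_on_def integrable_neg_iff)
  show "\<forall>s\<in>{0..l}. - phi s = - phi 0 + integral {0..s} (\<lambda>s. - g s)"
  proof
    fix s assume "s \<in> {0..l}"
    then have "phi s = phi 0 + integral {0..s} g" by (rule bspec[OF phi_eq])
    then show "- phi s = - phi 0 + integral {0..s} (\<lambda>s. - g s)" unfolding integral_neg by linarith
  qed
qed (rule l_pos)

lemma energy_uminus: "phase.energy (\<lambda>s. - g s) (\<lambda>s. - phi s) x y = energy x y"
proof -
  interpret neg: phase l "\<lambda>s. - g s" "\<lambda>s. - phi s" by (rule phase_uminus)
  have "neg.energy_density = energy_density"
    by (rule ext) (simp add: neg.energy_density_def energy_density_def)
  then show ?thesis by (simp add: neg.energy_def energy_def)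
qed

text \<open>The crossing may run forwards (\<open>x = a\<close>) or backwards (\<open>x = b\<close>) in time; the backward
  case is the forward case for the phase \<open>-phi\<close>, which has the same energy.\<close>

lemma energy_ge_crossings:
  assumes "0 \<le> a" "a \<le> b" "b \<le> l" "{x, y} = {a, b}"
    and "phi x \<le> 2*pi * of_int k + pi/3" "2*pi * of_int q - pi/3 \<le> phi y"
  shows "2*pi/3 * of_int (q - k) \<le> energy a b"
proof (cases "k < q")
  case False
  then have "2*pi/3 * of_int (q - k) \<le> 0" by (simp add: mult_nonneg_nonpos)
  then show ?thesis using energy_nonneg[of a b] assms by linarith
next
  case True
  define j where "j = nat (q - k - 1)"
  have q: "of_int q = of_int k + of_nat j + (1::real)" "of_int (q - k) = of_nat j + (1::real)"
    using True by (simp_all add: j_def)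
  have "2*pi * of_int q - pi/3 = 2*pi * of_int k + pi/3 + (2*pi * of_nat j + 4*pi/3)"
    by (simp add: q(1) algebra_simps)
  moreover have "0 \<le> 2*pi * of_nat j" by simp
  ultimately have "2*pi * of_int k + pi/3 < 2*pi * of_int q - pi/3"
    using pi_gt_zero by linarith
  then have "x \<noteq> y" using assms(5,6) by auto
  then consider "x = a" "y = b" | "x = b" "y = a" using assms(4) by (auto simp: doubleton_eq_iff)
  then show ?thesis
  proof cases
    case 1
    show ?thesis unfolding q(2)
      by (rule energy_ge_band_crossings[where k = k]) (use assms 1 q in \<open>auto simp: algebra_simps\<close>)
  next
    case 2
    interpret neg: phase l "\<lambda>s. - g s" "\<lambda>s. - phi s" by (rule phase_uminus)
    have "2*pi/3 * (of_nat j + 1) \<le> neg.energy a b"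
      by (rule neg.energy_ge_band_crossings[where k = "- q"])
        (use assms 2 q in \<open>auto simp: algebra_simps\<close>)
    then show ?thesis unfolding q(2) energy_uminus .
  qed
qed

lemma phase_le_of_energy:
  assumes "0 \<le> a" "a \<le> b" "b \<le> l" "{x, y} = {a, b}" "phi x \<le> 2*pi * of_int k + pi/3"
  shows "phi y \<le> 2*pi * of_int k + 3 * energy a b + 2*pi"
proof -
  define q where "q = \<lfloor>(phi y + pi/3)/(2*pi)\<rfloor>"
  have "of_int q \<le> (phi y + pi/3)/(2*pi)" "(phi y + pi/3)/(2*pi) < of_int q + 1"
    using floor_correct[of "(phi y + pi/3)/(2*pi)"] by (auto simp: q_def)
  then have q: "2*pi * of_int q - pi/3 \<le> phi y" "phi y < 2*pi * of_int q + 2*pi - pi/3"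
    using pi_gt_zero by (simp_all add: field_simps)
  have "2*pi/3 * of_int (q - k) \<le> energy a b"
    by (rule energy_ge_crossings[OF assms(1-5) q(1)])
  then have "2*pi * of_int q \<le> 2*pi * of_int k + 3 * energy a b"
    by (simp add: algebra_simps)
  then show ?thesis using q(2) pi_gt_zero by linarith
qed

lemma dist_phase_2pi_le_energy:
  assumes "0 \<le> a" "a \<le> b" "b \<le> l" "{x, y} = {a, b}" "\<bar>phi x - 2*pi * of_int k\<bar> \<le> pi/3"
  shows "\<bar>phi y - 2*pi * of_int k\<bar> \<le> 3 * energy a b + 2*pi"
proof -
  interpret neg: phase l "\<lambda>s. - g s" "\<lambda>s. - phi s" by (rule phase_uminus)
  have "phi y \<le> 2*pi * of_int k + 3 * energy a b + 2*pi"
    by (rule phase_le_of_energy[OF assms(1-4)]) (use assms(5) in linarith)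
  moreover have "- phi y \<le> 2*pi * of_int (- k) + 3 * neg.energy a b + 2*pi"
    by (rule neg.phase_le_of_energy[OF assms(1-4)]) (use assms(5) in linarith)
  ultimately show ?thesis unfolding energy_uminus by linarith
qed

lemma energy_ge_winding_jump:
  assumes "0 \<le> a" "a \<le> b" "b \<le> l"
    and "\<bar>phi a - 2*pi * of_int k\<bar> \<le> pi/3" "\<bar>phi b - 2*pi * of_int k'\<bar> \<le> pi/3"
  shows "2*pi/3 * of_int \<bar>k' - k\<bar> \<le> energy a b"
proof -
  have a: "phi a \<le> 2*pi * of_int k + pi/3" "2*pi * of_int k - pi/3 \<le> phi a"
    and b: "phi b \<le> 2*pi * of_int k' + pi/3" "2*pi * of_int k' - pi/3 \<le> phi b"
    using assms(4,5) unfolding abs_le_iff by linarith+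
  show ?thesis
  proof (cases "k \<le> k'")
    case True
    have "2*pi/3 * of_int (k' - k) \<le> energy a b"
      by (rule energy_ge_crossings[of a b a b]) (use assms(1-3) a b in auto)
    then show ?thesis using True by simp
  next
    case False
    have "2*pi/3 * of_int (k - k') \<le> energy a b"
      by (rule energy_ge_crossings[of a b b a]) (use assms(1-3) a b in auto)
    then show ?thesis using False by simp
  qed
qed

lemma integral_mult_approx_increment:
  assumes "0 \<le> x" "x \<le> y" "y \<le> l" "y - x \<le> h" and \<psi>: "1-lipschitz_on {0..l} \<psi>"
  shows "\<bar>integral {x..y} (\<lambda>s. \<psi> s * g s) - \<psi> x * (phi y - phi x)\<bar>
           \<le> h * integral {x..y} (\<lambda>s. \<bar>g s\<bar>)"
proof -
  have "(\<lambda>s. \<psi> s * g s) absolutely_integrable_on {0..l}"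
    using lipschitz_on_continuous_on[OF \<psi>] g_absolutely_integrable
    by (rule absolutely_integrable_continuous_mult)
  then have "(\<lambda>s. \<psi> s * g s) integrable_on {0..l}"
    by (simp add: absolutely_integrable_on_def)
  then have \<psi>g: "(\<lambda>s. \<psi> s * g s) integrable_on {x..y}"
    by (rule integrable_subinterval_real) (use assms in auto)
  have g: "g integrable_on {x..y}" "(\<lambda>s. \<bar>g s\<bar>) integrable_on {x..y}"
    using assms g_integrable_on abs_g_integrable_on by auto
  have "integral {x..y} (\<lambda>s. \<psi> s * g s) - \<psi> x * (phi y - phi x)
      = integral {x..y} (\<lambda>s. (\<psi> s - \<psi> x) * g s)"
    using phi_diff[of x y] assms \<psi>g g
    by (simp add: left_diff_distrib integral_diff integrable_on_mult_right)
  also have "\<bar>\<dots>\<bar> \<le> integral {x..y} (\<lambda>s. h * \<bar>g s\<bar>)"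
  proof (rule integral_norm_bound_integral[where 'a=real, simplified real_norm_def])
    show "(\<lambda>s. (\<psi> s - \<psi> x) * g s) integrable_on {x..y}"
      using \<psi>g g by (simp add: left_diff_distrib integrable_diff integrable_on_mult_right)
    show "(\<lambda>s. h * \<bar>g s\<bar>) integrable_on {x..y}"
      using g by (intro integrable_on_mult_right)
    fix s assume s: "s \<in> {x..y}"
    have "\<bar>\<psi> s - \<psi> x\<bar> \<le> \<bar>s - x\<bar>"
      using lipschitz_onD[OF \<psi>, of s x] s assms by (simp add: dist_real_def)
    also have "\<dots> \<le> h" using s assms by auto
    finally show "\<bar>(\<psi> s - \<psi> x) * g s\<bar> \<le> h * \<bar>g s\<bar>"
      unfolding abs_mult by (intro mult_right_mono) auto
  qed
  also have "\<dots> = h * integral {x..y} (\<lambda>s. \<bar>g s\<bar>)" by simp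
  finally show ?thesis .
qed

lemma integral_mult_approx_increments:
  assumes t: "mono t" "t 0 = 0" "t K = l" and mesh: "\<forall>i<K. t (Suc i) - t i \<le> h"
    and \<psi>: "1-lipschitz_on {0..l} \<psi>"
  shows "\<bar>integral {0..l} (\<lambda>s. \<psi> s * g s) - (\<Sum>i<K. \<psi> (t i) * (phi (t (Suc i)) - phi (t i)))\<bar>
           \<le> h * integral {0..l} (\<lambda>s. \<bar>g s\<bar>)"
proof -
  have t_in: "0 \<le> t i" "t i \<le> l" if "i \<le> K" for i
    using monoD[OF t(1), of 0 i] monoD[OF t(1), of i K] t that by auto
  have "(\<lambda>s. \<psi> s * g s) integrable_on {0..l}"
    using absolutely_integrable_continuous_mult[OF lipschitz_on_continuous_on[OF \<psi>]
        g_absolutely_integrable]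
    by (simp add: absolutely_integrable_on_def)
  then have split_\<psi>g: "integral {0..l} (\<lambda>s. \<psi> s * g s) = (\<Sum>i<K. integral {t i..t (Suc i)} (\<lambda>s. \<psi> s * g s))"
    using sum_integrals_partition[OF t(1)] t by simp
  have split_g: "integral {0..l} (\<lambda>s. \<bar>g s\<bar>) = (\<Sum>i<K. integral {t i..t (Suc i)} (\<lambda>s. \<bar>g s\<bar>))"
    using sum_integrals_partition[OF t(1)] abs_g_integrable_on[of 0 l] t by simp
  have "\<bar>integral {0..l} (\<lambda>s. \<psi> s * g s) - (\<Sum>i<K. \<psi> (t i) * (phi (t (Suc i)) - phi (t i)))\<bar>
      \<le> (\<Sum>i<K. \<bar>integral {t i..t (Suc i)} (\<lambda>s. \<psi> s * g s) - \<psi> (t i) * (phi (t (Suc i)) - phi (t i))\<bar>)"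
    unfolding split_\<psi>g sum_subtractf[symmetric] by (rule sum_abs)
  also have "\<dots> \<le> (\<Sum>i<K. h * integral {t i..t (Suc i)} (\<lambda>s. \<bar>g s\<bar>))"
  proof (rule sum_mono)
    fix i assume "i \<in> {..<K}"
    then show "\<bar>integral {t i..t (Suc i)} (\<lambda>s. \<psi> s * g s) - \<psi> (t i) * (phi (t (Suc i)) - phi (t i))\<bar>
        \<le> h * integral {t i..t (Suc i)} (\<lambda>s. \<bar>g s\<bar>)"
      using t_in[of i] t_in[of "Suc i"] mesh monoD[OF t(1), of i "Suc i"]
      by (intro integral_mult_approx_increment \<psi>) auto
  qed
  also have "\<dots> = h * integral {0..l} (\<lambda>s. \<bar>g s\<bar>)"
    unfolding split_g by (simp add: sum_distrib_left)
  finally show ?thesis .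
qed

end

section \<open>Approximation by integer point masses\<close>

definition atomic_approx ::
    "real \<Rightarrow> (real \<Rightarrow> real) \<Rightarrow> nat \<Rightarrow> real \<Rightarrow> (nat \<Rightarrow> real) \<Rightarrow> (nat \<Rightarrow> int) \<Rightarrow> bool" where
  "atomic_approx l f Q err pos wt \<longleftrightarrow>
     (\<forall>j<Q. pos j \<in> {0..l} \<and> \<bar>wt j\<bar> \<le> int Q) \<and>
     (\<forall>\<psi>. flat_admissible l \<psi> \<longrightarrow>
        \<bar>integral {0..l} (\<lambda>s. \<psi> s * f s) - 2*pi * (\<Sum>j<Q. of_int (wt j) * \<psi> (pos j))\<bar> \<le> err)"

lemma atomic_approx_mono:
  "atomic_approx l f Q err pos wt \<Longrightarrow> err \<le> err' \<Longrightarrow> atomic_approx l f Q err' pos wt"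
  unfolding atomic_approx_def by (meson order_trans)

lemma sum_weighted_points_as_atoms:
  fixes d :: "nat \<Rightarrow> int" and x :: "nat \<Rightarrow> real"
  assumes sum_le: "(\<Sum>i<N. \<bar>d i\<bar>) \<le> int Q" and "\<forall>i<N. x i \<in> A" "z \<in> A"
  shows "\<exists>pos wt. (\<forall>j<Q. pos j \<in> A \<and> \<bar>wt j\<bar> \<le> int Q) \<and>
     (\<forall>\<psi>::real\<Rightarrow>real. (\<Sum>i<N. of_int (d i) * \<psi> (x i)) = (\<Sum>j<Q. of_int (wt j) * \<psi> (pos j)))"
proof -
  define S where "S = {i\<in>{..<N}. d i \<noteq> 0}"
  have "int (card S) = (\<Sum>i\<in>S. 1)" by simp
  also have "\<dots> \<le> (\<Sum>i\<in>S. \<bar>d i\<bar>)" by (rule sum_mono) (auto simp: S_def)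
  also have "\<dots> \<le> (\<Sum>i<N. \<bar>d i\<bar>)" by (rule sum_mono2) (auto simp: S_def)
  finally have card_S: "card S \<le> Q" using sum_le by linarith
  obtain h where h: "bij_betw h {0..<card S} S"
    using ex_bij_betw_nat_finite[of S] by (auto simp: S_def)
  have hS: "j < card S \<Longrightarrow> h j \<in> S" for j using h by (auto simp: bij_betw_def)
  define pos where "pos j = (if j < card S then x (h j) else z)" for j
  define wt where "wt j = (if j < card S then d (h j) else 0)" for j
  have "pos j \<in> A \<and> \<bar>wt j\<bar> \<le> int Q" if "j < Q" for j
  proof (cases "j < card S")
    case True
    then have "h j \<in> {..<N}" using hS by (auto simp: S_def)
    then have "\<bar>d (h j)\<bar> \<le> (\<Sum>i<N. \<bar>d i\<bar>)" by (rule member_le_sum) auto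
    then show ?thesis using True hS[of j] assms by (auto simp: pos_def wt_def S_def)
  qed (use assms in \<open>auto simp: pos_def wt_def\<close>)
  moreover have "(\<Sum>i<N. of_int (d i) * \<psi> (x i)) = (\<Sum>j<Q. of_int (wt j) * \<psi> (pos j))"
    for \<psi> :: "real \<Rightarrow> real"
  proof -
    have "(\<Sum>i<N. of_int (d i) * \<psi> (x i)) = (\<Sum>i\<in>S. of_int (d i) * \<psi> (x i))"
      by (rule sum.mono_neutral_right) (auto simp: S_def)
    also have "\<dots> = (\<Sum>j\<in>{0..<card S}. of_int (d (h j)) * \<psi> (x (h j)))"
      by (rule sum.reindex_bij_betw[OF h, symmetric])
    also have "\<dots> = (\<Sum>j\<in>{0..<card S}. of_int (wt j) * \<psi> (pos j))"
      by (rule sum.cong) (auto simp: wt_def pos_def)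
    also have "\<dots> = (\<Sum>j<Q. of_int (wt j) * \<psi> (pos j))"
      by (rule sum.mono_neutral_left) (use card_S in \<open>auto simp: wt_def\<close>)
    finally show ?thesis .
  qed
  ultimately show ?thesis by blast
qed

lemma grid_through_cells:
  fixes w :: real and N :: nat
  assumes "0 < w" and cells: "\<forall>i<N. \<exists>s. real i * w \<le> s \<and> s \<le> (real i + 1) * w \<and> P s"
  shows "\<exists>t. mono t \<and> t 0 = 0 \<and> t (Suc N) = real N * w \<and> (\<forall>i. t (Suc i) - t i \<le> 2*w) \<and>
             (\<forall>i\<in>{1..N}. P (t i))"
proof -
  obtain p where p: "\<And>i. i < N \<Longrightarrow> real i * w \<le> p i \<and> p i \<le> (real i + 1) * w \<and> P (p i)"
    using cells by metis
  define t where "t i = (if i = 0 then 0 else if i \<le> N then p (i - 1) else real N * w)" for i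
  have t_cell: "(real i - 1) * w \<le> t i \<and> t i \<le> real i * w \<and> P (t i)" if "1 \<le> i" "i \<le> N" for i
    using p[of "i - 1"] that by (simp add: t_def of_nat_diff)
  have step: "t i \<le> t (Suc i) \<and> t (Suc i) - t i \<le> 2*w" for i
  proof -
    consider "N = 0" | "1 \<le> N" "i = 0" | "1 \<le> i" "i < N" | "1 \<le> N" "i = N" | "N < i"
      by linarith
    then show ?thesis
    proof cases
      case 1
      then show ?thesis using \<open>0 < w\<close> by (simp add: t_def)
    next
      case 2
      then show ?thesis using t_cell[of 1] \<open>0 < w\<close> by (simp add: t_def)
    next
      case 3
      then show ?thesis using t_cell[of i] t_cell[of "Suc i"] by (simp add: algebra_simps)
    next
      case 4
      then show ?thesis using t_cell[of N] \<open>0 < w\<close> by (simp add: t_def algebra_simps)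
    next
      case 5
      then show ?thesis using \<open>0 < w\<close> by (simp add: t_def)
    qed
  qed
  have "mono t" using step by (simp add: mono_iff_le_Suc)
  moreover have "t 0 = 0" "t (Suc N) = real N * w" by (simp_all add: t_def)
  ultimately show ?thesis using step t_cell by (intro exI[of _ t]) auto
qed

context phase
begin

text \<open>Below, the inner grid nodes satisfy \<open>phi (t i) \<approx> 2 pi n i\<close> for \<open>1 \<le> i \<le> N\<close>, whereas
  \<open>n 0\<close> is not tied to \<open>t 0 = 0\<close> but fixed by the winding number of \<open>phi\<close>. Since test functions
  take the same value at \<open>0\<close> and \<open>l\<close>, the atom at \<open>0\<close> can then absorb the two boundary pieces
  \<open>[0, t 1]\<close> and \<open>[t N, l]\<close> together.\<close>

lemma sum_winding_jumps_le_energy: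
  assumes N: "1 \<le> N" and t: "mono t" "t 0 = 0" "t (Suc N) = l"
    and near: "\<And>i. 1 \<le> i \<Longrightarrow> i \<le> N \<Longrightarrow> \<bar>phi (t i) - 2*pi * of_int (n i)\<bar> \<le> pi/3"
    and wrap: "phi l - phi 0 = 2*pi * of_int (n N - n 0)"
  shows "2*pi * (\<Sum>i<N. of_int \<bar>n (Suc i) - n i\<bar>) \<le> 3 * energy 0 l + 4*pi"
proof -
  have t_in: "0 \<le> t i" "t i \<le> l" if "i \<le> Suc N" for i
    using monoD[OF t(1), of 0 i] monoD[OF t(1), of i "Suc N"] t that by auto
  have t_mono: "t i \<le> t (Suc i)" for i using t(1) by (simp add: mono_iff_le_Suc)
  define E where "E i = energy (t i) (t (Suc i))" for i
  have "(\<Sum>i<Suc N. E i) = energy 0 l"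
    using sum_integrals_partition[OF t(1), of energy_density "Suc N"]
      energy_density_integrable_on[of 0 l] t
    by (simp add: E_def energy_def)
  moreover have "(\<Sum>i<Suc N. E i) = E 0 + (\<Sum>i\<in>{1..<N}. E i) + E N"
    using N by (simp add: lessThan_atLeast0 sum.atLeast_Suc_lessThan)
  ultimately have E_sum: "E 0 + (\<Sum>i\<in>{1..<N}. E i) + E N = energy 0 l" by simp
  have "\<bar>phi 0 - 2*pi * of_int (n 1)\<bar> \<le> 3 * E 0 + 2*pi"
    using dist_phase_2pi_le_energy[of "t 0" "t 1" "t 1" "t 0"] t_in[of 1] t_mono[of 0] near[of 1] N t(2)
    by (auto simp: E_def insert_commute)
  moreover have "\<bar>phi l - 2*pi * of_int (n N)\<bar> \<le> 3 * E N + 2*pi"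
    using dist_phase_2pi_le_energy[of "t N" "t (Suc N)" "t N" "t (Suc N)"] t_in[of N] t_mono[of N]
      near[of N] N t(3)
    by (auto simp: E_def)
  moreover have "2*pi * of_int (n 1 - n 0)
      = (2*pi * of_int (n 1) - phi 0) + (phi l - 2*pi * of_int (n N))"
    using wrap by (simp add: algebra_simps)
  ultimately have first: "2*pi * of_int \<bar>n 1 - n 0\<bar> \<le> 3 * E 0 + 3 * E N + 4*pi"
    by (simp add: abs_le_iff) linarith
  have inner: "2*pi * of_int \<bar>n (Suc i) - n i\<bar> \<le> 3 * E i" if "i \<in> {1..<N}" for i
    using energy_ge_winding_jump[of "t i" "t (Suc i)" "n i" "n (Suc i)"] t_in[of i] t_in[of "Suc i"]
      t_mono[of i] near[of i] near[of "Suc i"] that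
    by (auto simp: E_def)
  have "2*pi * (\<Sum>i<N. of_int \<bar>n (Suc i) - n i\<bar>)
      = 2*pi * of_int \<bar>n 1 - n 0\<bar> + (\<Sum>i\<in>{1..<N}. 2*pi * of_int \<bar>n (Suc i) - n i\<bar>)"
    using N by (simp add: lessThan_atLeast0 sum.atLeast_Suc_lessThan distrib_left sum_distrib_left)
  also have "\<dots> \<le> 3 * E 0 + 3 * E N + 4*pi + (\<Sum>i\<in>{1..<N}. 3 * E i)"
  proof -
    have "(\<Sum>i\<in>{1..<N}. 2*pi * of_int \<bar>n (Suc i) - n i\<bar>) \<le> (\<Sum>i\<in>{1..<N}. 3 * E i)"
      by (rule sum_mono) (rule inner)
    then show ?thesis using first by linarith
  qed
  also have "\<dots> = 3 * energy 0 l + 4*pi"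
    unfolding E_sum[symmetric] by (simp add: sum_distrib_left algebra_simps)
  finally show ?thesis .
qed

lemma integral_mult_approx_winding_jumps:
  assumes N: "1 \<le> N" and t: "mono t" "t 0 = 0" "t (Suc N) = l"
    and mesh: "\<forall>i. t (Suc i) - t i \<le> h"
    and near: "\<And>i. 1 \<le> i \<Longrightarrow> i \<le> N \<Longrightarrow> \<bar>phi (t i) - 2*pi * of_int (n i)\<bar> \<le> \<eta>"
    and wrap: "phi l - phi 0 = 2*pi * of_int (n N - n 0)"
    and last: "\<bar>phi l - 2*pi * of_int (n N)\<bar> \<le> B"
    and \<psi>: "flat_admissible l \<psi>"
  shows "\<bar>integral {0..l} (\<lambda>s. \<psi> s * g s) - 2*pi * (\<Sum>i<N. of_int (n (Suc i) - n i) * \<psi> (t i))\<bar>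
           \<le> h * integral {0..l} (\<lambda>s. \<bar>g s\<bar>) + h * B + \<eta> * l"
proof -
  have lip: "1-lipschitz_on {0..l} \<psi>"
    using flat_admissible_lipschitz[OF \<psi>] l_pos by simp
  have t_in: "t i \<in> {0..l}" if "i \<le> Suc N" for i
    using monoD[OF t(1), of 0 i] monoD[OF t(1), of i "Suc N"] t that by auto
  have t_mono: "t i \<le> t (Suc i)" for i using t(1) by (simp add: mono_iff_le_Suc)
  have "0 \<le> h" using mesh t_mono[of 0] by (metis diff_ge_0_iff_ge order_trans)
  have "0 \<le> \<eta>" using near[of 1] N by (meson abs_ge_zero order_trans order_refl)
  define a where "a i = \<psi> (t i)" for i
  define u where "u i = phi (t i)" for i
  define v where "v i = 2*pi * of_int (n i)" for i
  define S1 where "S1 = (\<Sum>i<Suc N. a i * (u (Suc i) - u i))"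
  define S2 where "S2 = (\<Sum>i<N. a i * (v (Suc i) - v i))"
  have riemann: "\<bar>integral {0..l} (\<lambda>s. \<psi> s * g s) - S1\<bar> \<le> h * integral {0..l} (\<lambda>s. \<bar>g s\<bar>)"
    unfolding S1_def a_def u_def using mesh
    by (intro integral_mult_approx_increments[OF t _ lip]) auto
  have S2_eq: "S2 = 2*pi * (\<Sum>i<N. of_int (n (Suc i) - n i) * \<psi> (t i))"
    by (simp add: S2_def a_def v_def sum_distrib_left algebra_simps)
  have "a (Suc N) = a 0"
    using \<psi> t by (simp add: a_def flat_admissible_def)
  moreover have "v 0 = v N - u (Suc N) + u 0"
    using wrap t by (simp add: v_def u_def algebra_simps)
  ultimately have "S1 - S2 = (a 0 - a N) * (v N - u (Suc N))
      - (\<Sum>i<N. (u (Suc i) - v (Suc i)) * (a (Suc i) - a i))"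
    unfolding S1_def S2_def by (rule sum_mult_diff_by_parts_periodic)
  moreover have "\<bar>(a 0 - a N) * (v N - u (Suc N))\<bar> \<le> h * B"
  proof -
    have "\<bar>a 0 - a N\<bar> = \<bar>\<psi> (t (Suc N)) - \<psi> (t N)\<bar>"
      using \<psi> t by (simp add: a_def flat_admissible_def)
    also have "\<dots> \<le> t (Suc N) - t N"
      using lipschitz_onD[OF lip t_in[of "Suc N"] t_in[of N]] t_mono[of N] by (simp add: dist_real_def)
    also have "\<dots> \<le> h" using mesh by simp
    finally show ?thesis
      using last t \<open>0 \<le> h\<close> unfolding abs_mult
      by (intro mult_mono) (auto simp: u_def v_def abs_minus_commute)
  qed
  moreover have "\<bar>\<Sum>i<N. (u (Suc i) - v (Suc i)) * (a (Suc i) - a i)\<bar> \<le> \<eta> * (t N - t 0)"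
    unfolding a_def using near t_in t_mono
    by (intro sum_mult_lipschitz_increments_le[OF lip]) (auto simp: u_def v_def)
  moreover have "\<eta> * (t N - t 0) \<le> \<eta> * l"
    using t_in[of N] t(2) \<open>0 \<le> \<eta>\<close> by (intro mult_left_mono) auto
  ultimately have "\<bar>S1 - S2\<bar> \<le> h * B + \<eta> * l" by linarith
  then show ?thesis using riemann S2_eq by linarith
qed

lemma atomic_approx_phase:
  assumes N: "1 \<le> N" and winding: "phi l - phi 0 = 2*pi * of_int m"
    and energy_le: "energy 0 l \<le> M" and L1: "integral {0..l} (\<lambda>s. \<bar>g s\<bar>) \<le> G"
    and \<delta>: "0 \<le> \<delta>" "\<delta> \<le> 1/8"
    and cells: "\<forall>i<N. \<exists>s. real i * (l / N) \<le> s \<and> s \<le> (real i + 1) * (l / N) \<and>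
                         \<bar>sin (phi s / 2)\<bar> \<le> \<delta>"
    and Q: "M + 2 \<le> real Q"
  shows "\<exists>pos wt. atomic_approx l g Q (2*(l/N)*G + 2*(l/N)*(3*M + 2*pi) + 8*\<delta>*l) pos wt"
proof -
  have w: "0 < l / N" using l_pos N by simp
  obtain t where t: "mono t" "t 0 = 0" "t (Suc N) = l" and mesh: "\<forall>i. t (Suc i) - t i \<le> 2*(l/N)"
    and good: "\<forall>i\<in>{1..N}. \<bar>sin (phi (t i) / 2)\<bar> \<le> \<delta>"
    using grid_through_cells[OF w cells] N by auto
  have t_in: "0 \<le> t i" "t i \<le> l" if "i \<le> Suc N" for i
    using monoD[OF t(1), of 0 i] monoD[OF t(1), of i "Suc N"] t that by auto
  define n where "n i = (if i = 0 then round (phi (t N) / (2*pi)) - m else round (phi (t i) / (2*pi)))"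
    for i
  have near: "\<bar>phi (t i) - 2*pi * of_int (n i)\<bar> \<le> 8*\<delta>" if "1 \<le> i" "i \<le> N" for i
    using dist_2pi_round_le_abs_sin_half[of "phi (t i)"] good that by (force simp: n_def)
  have near3: "\<bar>phi (t i) - 2*pi * of_int (n i)\<bar> \<le> pi/3" if "1 \<le> i" "i \<le> N" for i
    using near[OF that] \<delta> pi_gt3 by linarith
  have wrap: "phi l - phi 0 = 2*pi * of_int (n N - n 0)"
    using winding N by (simp add: n_def algebra_simps)
  have "\<bar>phi l - 2*pi * of_int (n N)\<bar> \<le> 3 * energy (t N) l + 2*pi"
    using dist_phase_2pi_le_energy[of "t N" l "t N" l] t_in[of N] near3[of N] N by auto
  also have "energy (t N) l \<le> M"
    using energy_mono[of 0 "t N" l l] t_in[of N] energy_le by auto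
  finally have last: "\<bar>phi l - 2*pi * of_int (n N)\<bar> \<le> 3 * M + 2*pi" by simp
  have "0 \<le> M" using energy_nonneg[of 0 l] energy_le by simp
  have "2*pi * (\<Sum>i<N. of_int \<bar>n (Suc i) - n i\<bar>) \<le> 3 * M + 4*pi"
    using sum_winding_jumps_le_energy[OF N t near3 wrap] energy_le by simp
  then have "(\<Sum>i<N. of_int \<bar>n (Suc i) - n i\<bar>) \<le> 3 * M / (2*pi) + 2"
    using pi_gt_zero by (simp add: field_simps)
  also have "3 * M / (2*pi) \<le> M"
    using \<open>0 \<le> M\<close> pi_gt3 by (simp add: field_simps) (intro mult_left_mono, auto)
  finally have "real_of_int (\<Sum>i<N. \<bar>n (Suc i) - n i\<bar>) \<le> real Q" using Q by simp
  then have "(\<Sum>i<N. \<bar>n (Suc i) - n i\<bar>) \<le> int Q" by linarith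
  then obtain pos wt where pw: "\<forall>j<Q. pos j \<in> {0..l} \<and> \<bar>wt j\<bar> \<le> int Q"
    and regroup: "\<And>\<psi>::real\<Rightarrow>real. (\<Sum>i<N. of_int (n (Suc i) - n i) * \<psi> (t i))
                                    = (\<Sum>j<Q. of_int (wt j) * \<psi> (pos j))"
    using sum_weighted_points_as_atoms[of "\<lambda>i. n (Suc i) - n i" N Q t "{0..l}" 0] t_in l_pos
    by fastforce
  have "\<bar>integral {0..l} (\<lambda>s. \<psi> s * g s) - 2*pi * (\<Sum>j<Q. of_int (wt j) * \<psi> (pos j))\<bar>
          \<le> 2*(l/N)*G + 2*(l/N)*(3*M + 2*pi) + 8*\<delta>*l" if \<psi>: "flat_admissible l \<psi>" for \<psi>
  proof -
    have "\<bar>integral {0..l} (\<lambda>s. \<psi> s * g s) - 2*pi * (\<Sum>j<Q. of_int (wt j) * \<psi> (pos j))\<bar>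
        \<le> 2*(l/N) * integral {0..l} (\<lambda>s. \<bar>g s\<bar>) + 2*(l/N)*(3*M + 2*pi) + 8*\<delta>*l"
      unfolding regroup[symmetric]
      by (rule integral_mult_approx_winding_jumps[OF N t mesh near wrap last \<psi>])
    also have "2*(l/N) * integral {0..l} (\<lambda>s. \<bar>g s\<bar>) \<le> 2*(l/N)*G"
      by (rule mult_left_mono) (use L1 w in auto)
    finally show ?thesis by simp
  qed
  then show ?thesis using pw unfolding atomic_approx_def by blast
qed

end

section \<open>The phase between two closed curves\<close>

lemma curvature_of_phase:
  assumes "0 < l" and curv: "curvature_of l dg k" "curvature_of l de ke"
    and closed: "dg 0 = dg l" "de 0 = de l"
  shows "\<exists>phi m. phase l (\<lambda>s. ke s - k s) phi \<and> phi l - phi 0 = 2*pi * of_int m \<and>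
           (\<forall>s\<in>{0..l}. (norm (de s - dg s))\<^sup>2 = 4 * (sin (phi s / 2))\<^sup>2)"
proof -
  obtain th where th: "\<forall>s\<in>{0..l}. dg s = vector [cos (th s), sin (th s)] \<and> th s = th 0 + integral {0..s} k"
    and k: "k absolutely_integrable_on {0..l}"
    using curv(1) unfolding curvature_of_def by blast
  obtain te where te: "\<forall>s\<in>{0..l}. de s = vector [cos (te s), sin (te s)] \<and> te s = te 0 + integral {0..s} ke"
    and ke: "ke absolutely_integrable_on {0..l}"
    using curv(2) unfolding curvature_of_def by blast
  define phi where "phi s = te s - th s" for s
  have ends: "0 \<in> {0..l}" "l \<in> {0..l}" using \<open>0 < l\<close> by auto
  have "phase l (\<lambda>s. ke s - k s) phi"
  proof
    show "(\<lambda>s. ke s - k s) absolutely_integrable_on {0..l}"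
      using ke k by (rule set_integral_diff(1))
    show "\<forall>s\<in>{0..l}. phi s = phi 0 + integral {0..s} (\<lambda>s. ke s - k s)"
    proof
      fix s assume s: "s \<in> {0..l}"
      have "integral {0..s} (\<lambda>s. ke s - k s) = integral {0..s} ke - integral {0..s} k"
        using s set_lebesgue_integral_eq_integral(1)[OF ke] set_lebesgue_integral_eq_integral(1)[OF k]
        by (intro integral_diff) (auto intro: integrable_subinterval_real)
      then show "phi s = phi 0 + integral {0..s} (\<lambda>s. ke s - k s)"
        using bspec[OF te s] bspec[OF th s] by (simp add: phi_def)
    qed
  qed (rule \<open>0 < l\<close>)
  moreover obtain m1 :: int where "th l = th 0 + 2*pi * of_int m1"
    using cis_vector_eq_imp_2pi_multiple[of "th l" "th 0"] bspec[OF th ends(1)] bspec[OF th ends(2)]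
      closed(1) by metis
  moreover obtain m2 :: int where "te l = te 0 + 2*pi * of_int m2"
    using cis_vector_eq_imp_2pi_multiple[of "te l" "te 0"] bspec[OF te ends(1)] bspec[OF te ends(2)]
      closed(2) by metis
  ultimately have "phase l (\<lambda>s. ke s - k s) phi \<and> phi l - phi 0 = 2*pi * of_int (m2 - m1)"
    by (simp add: phi_def algebra_simps)
  moreover have "(norm (de s - dg s))\<^sup>2 = 4 * (sin (phi s / 2))\<^sup>2" if "s \<in> {0..l}" for s
    using bspec[OF te that] bspec[OF th that] norm_cis_vector_diff_sq[of "te s" "th s"]
    by (simp add: phi_def)
  ultimately show ?thesis by blast
qed

context phase
begin

lemma small_sin_in_cells:
  fixes N :: nat
  assumes "1 \<le> N" "0 \<le> \<delta>"
    and small: "integral {0..l} (\<lambda>s. (sin (phi s / 2))\<^sup>2) < (l / N) * \<delta>\<^sup>2"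
  shows "\<forall>i<N. \<exists>s. real i * (l / N) \<le> s \<and> s \<le> (real i + 1) * (l / N) \<and> \<bar>sin (phi s / 2)\<bar> \<le> \<delta>"
proof (intro allI impI, rule ccontr)
  fix i assume i: "i < N"
    and no_small: "\<not> (\<exists>s. real i * (l / N) \<le> s \<and> s \<le> (real i + 1) * (l / N) \<and> \<bar>sin (phi s / 2)\<bar> \<le> \<delta>)"
  define w where "w = l / N"
  have "0 < w" using l_pos assms(1) by (simp add: w_def)
  have "(real i + 1) * w \<le> real N * w" using i \<open>0 < w\<close> by (intro mult_right_mono) auto
  moreover have "real N * w = l" using assms(1) by (simp add: w_def)
  ultimately have cell: "{real i * w..(real i + 1) * w} \<subseteq> {0..l}"
    using \<open>0 < w\<close> by auto
  have sin2: "(\<lambda>s. (sin (phi s / 2))\<^sup>2) integrable_on {0..l}"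
    by (intro integrable_continuous_real continuous_intros continuous_on_phi) simp
  have "w * \<delta>\<^sup>2 = integral {real i * w..(real i + 1) * w} (\<lambda>s. \<delta>\<^sup>2)"
    using \<open>0 < w\<close> by (simp add: algebra_simps)
  also have "\<dots> \<le> integral {real i * w..(real i + 1) * w} (\<lambda>s. (sin (phi s / 2))\<^sup>2)"
  proof (rule integral_le)
    show "(\<lambda>s. (sin (phi s / 2))\<^sup>2) integrable_on {real i * w..(real i + 1) * w}"
      using sin2 cell by (rule integrable_on_subinterval)
    fix s assume "s \<in> {real i * w..(real i + 1) * w}"
    then have "\<delta> < \<bar>sin (phi s / 2)\<bar>" using no_small by (auto simp: w_def)
    then show "\<delta>\<^sup>2 \<le> (sin (phi s / 2))\<^sup>2"
      using \<open>0 \<le> \<delta>\<close> by (metis abs_of_nonneg less_imp_le power2_abs power_mono)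
  qed (rule integrable_const_ivl)
  also have "\<dots> \<le> integral {0..l} (\<lambda>s. (sin (phi s / 2))\<^sup>2)"
    using sin2 cell by (intro integral_subset_le integrable_on_subinterval[OF sin2]) auto
  finally show False using small by (simp add: w_def)
qed

lemma energy_le_of_L2_bounds:
  assumes g_le: "\<forall>s\<in>{0..l}. \<bar>g s\<bar> \<le> \<bar>f s\<bar> + \<bar>k s\<bar>"
    and f2: "(\<lambda>s. (f s)\<^sup>2) integrable_on {0..l}" and k: "(\<lambda>s. \<bar>k s\<bar>) integrable_on {0..l}"
    and "0 < T" "0 \<le> C" and f2_le: "integral {0..l} (\<lambda>s. (f s)\<^sup>2) \<le> C * T"
    and sin2_le: "integral {0..l} (\<lambda>s. (sin (phi s / 2))\<^sup>2) \<le> C / (4 * T)"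
  shows "energy 0 l \<le> C + integral {0..l} (\<lambda>s. \<bar>k s\<bar>)"
proof -
  have "(\<lambda>s. (sin (phi s / 2))\<^sup>2) integrable_on {0..l}"
    by (intro integrable_continuous_real continuous_intros continuous_on_phi) simp
  then have "energy 0 l
      \<le> (integral {0..l} (\<lambda>s. (f s)\<^sup>2) / T + T * integral {0..l} (\<lambda>s. (sin (phi s / 2))\<^sup>2)) / 2
         + integral {0..l} (\<lambda>s. \<bar>k s\<bar>)"
    unfolding energy_def energy_density_def
    using energy_density_integrable_on[of 0 l, unfolded energy_density_def] f2 k
    by (intro integral_abs_mult_le_weighted_squares[OF \<open>0 < T\<close> g_le]) auto
  also have "\<dots> \<le> (C + T * (C / (4 * T))) / 2 + integral {0..l} (\<lambda>s. \<bar>k s\<bar>)"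
    using f2_le sin2_le \<open>0 < T\<close>
    by (intro add_right_mono divide_right_mono add_mono mult_left_mono) (auto simp: field_simps)
  also have "\<dots> \<le> C + integral {0..l} (\<lambda>s. \<bar>k s\<bar>)"
    using \<open>0 < T\<close> \<open>0 \<le> C\<close> by (simp add: field_simps)
  finally show ?thesis .
qed

lemma integral_abs_g_le_of_L2_bound:
  assumes g_le: "\<forall>s\<in>{0..l}. \<bar>g s\<bar> \<le> \<bar>f s\<bar> + \<bar>k s\<bar>"
    and f2: "(\<lambda>s. (f s)\<^sup>2) integrable_on {0..l}" and k: "(\<lambda>s. \<bar>k s\<bar>) integrable_on {0..l}"
    and "0 < T" and f2_le: "integral {0..l} (\<lambda>s. (f s)\<^sup>2) \<le> C * T\<^sup>2"
  shows "integral {0..l} (\<lambda>s. \<bar>g s\<bar>) \<le> (C + l) * T / 2 + integral {0..l} (\<lambda>s. \<bar>k s\<bar>)"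
proof -
  have "integral {0..l} (\<lambda>s. \<bar>g s\<bar> * \<bar>1\<bar>)
      \<le> (integral {0..l} (\<lambda>s. (f s)\<^sup>2) / T + T * integral {0..l} (\<lambda>s. 1\<^sup>2)) / 2
         + integral {0..l} (\<lambda>s. \<bar>k s\<bar>)"
    using abs_g_integrable_on[of 0 l] f2 k
    by (intro integral_abs_mult_le_weighted_squares[OF \<open>0 < T\<close> g_le]) auto
  also have "\<dots> \<le> (C * T\<^sup>2 / T + T * l) / 2 + integral {0..l} (\<lambda>s. \<bar>k s\<bar>)"
    using f2_le \<open>0 < T\<close> l_pos by (intro add_right_mono divide_right_mono add_mono) auto
  also have "\<dots> = (C + l) * T / 2 + integral {0..l} (\<lambda>s. \<bar>k s\<bar>)"
    using \<open>0 < T\<close> by (simp add: field_simps power2_eq_square)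
  finally show ?thesis by simp
qed

end

text \<open>The scales: for \<open>sqrt e = 1 / n\<^sup>1\<^sup>2\<close> the interval is cut into \<open>n\<^sup>9\<close> cells, each of
  which contains a point where \<open>\<bar>sin (phi/2)\<bar> \<le> 1 / (8 n)\<close>.\<close>

lemma atomic_approx_curvature_diff:
  fixes n :: nat
  assumes l: "0 < l" and C: "0 < C" and n: "1 \<le> n" "16 * C < l * real n"
    and curv: "curvature_of l dg k" "curvature_of l de ke"
    and closed: "dg 0 = dg l" "de 0 = de l"
    and ke2: "(\<lambda>s. (ke s)\<^sup>2) integrable_on {0..l}"
    and e: "sqrt e = 1 / real n ^ 12"
    and bound1: "sqrt e * integral {0..l} (\<lambda>s. (ke s)\<^sup>2) \<le> C"
    and bound2: "integral {0..l} (\<lambda>s. (norm (de s - dg s))\<^sup>2) \<le> C * sqrt e"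
  defines "K \<equiv> integral {0..l} (\<lambda>s. \<bar>k s\<bar>)"
  shows "\<exists>pos wt. atomic_approx l (\<lambda>s. ke s - k s) (nat \<lceil>C + K\<rceil> + 2)
            ((l*(C + l) + 2*l*K + 2*l*(3*(C + K) + 2*pi) + l) / real n) pos wt"
proof -
  obtain phi m where P: "phase l (\<lambda>s. ke s - k s) phi" and winding: "phi l - phi 0 = 2*pi * of_int m"
    and angle: "\<forall>s\<in>{0..l}. (norm (de s - dg s))\<^sup>2 = 4 * (sin (phi s / 2))\<^sup>2"
    using curvature_of_phase[OF l curv closed] by blast
  interpret phase l "\<lambda>s. ke s - k s" phi by (rule P)
  have abs_k: "(\<lambda>s. \<bar>k s\<bar>) integrable_on {0..l}"
    using curv(1) by (simp add: curvature_of_def absolutely_integrable_on_def)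
  have "0 \<le> K" unfolding K_def by (rule integral_nonneg[OF abs_k]) auto
  have npos: "0 < real n" using n by simp
  have ke2_le: "integral {0..l} (\<lambda>s. (ke s)\<^sup>2) \<le> C * real n ^ 12"
    using bound1 npos unfolding e by (simp add: field_simps)
  have "integral {0..l} (\<lambda>s. (norm (de s - dg s))\<^sup>2) = integral {0..l} (\<lambda>s. 4 * (sin (phi s / 2))\<^sup>2)"
    using angle by (intro integral_cong) auto
  then have sin2: "integral {0..l} (\<lambda>s. (sin (phi s / 2))\<^sup>2) \<le> C / (4 * real n ^ 12)"
    using bound2 unfolding e by (simp add: field_simps)
  have g_le: "\<forall>s\<in>{0..l}. \<bar>ke s - k s\<bar> \<le> \<bar>ke s\<bar> + \<bar>k s\<bar>" by auto
  have energy_le: "energy 0 l \<le> C + K"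
    unfolding K_def using ke2_le sin2 npos C
    by (intro energy_le_of_L2_bounds[OF g_le ke2 abs_k]) auto
  have L1: "integral {0..l} (\<lambda>s. \<bar>ke s - k s\<bar>) \<le> (C + l) * real n ^ 6 / 2 + K"
    unfolding K_def using ke2_le npos
    by (intro integral_abs_g_le_of_L2_bound[OF g_le ke2 abs_k]) (auto simp: power_mult[symmetric])
  define \<delta> where "\<delta> = 1 / (8 * real n)"
  have \<delta>: "0 \<le> \<delta>" "\<delta> \<le> 1/8" using n by (auto simp: \<delta>_def field_simps)
  have "C / (4 * real n ^ 12) < (l / real (n ^ 9)) * \<delta>\<^sup>2"
    using n npos by (simp add: \<delta>_def field_simps power2_eq_square eval_nat_numeral)
  then have cells: "\<forall>i<n ^ 9. \<exists>s. real i * (l / real (n ^ 9)) \<le> s \<and> s \<le> (real i + 1) * (l / real (n ^ 9)) \<and>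
                         \<bar>sin (phi s / 2)\<bar> \<le> \<delta>"
    using n sin2 \<delta> by (intro small_sin_in_cells) auto
  have Q: "C + K + 2 \<le> real (nat \<lceil>C + K\<rceil> + 2)" by linarith
  obtain pos wt where "atomic_approx l (\<lambda>s. ke s - k s) (nat \<lceil>C + K\<rceil> + 2)
      (2*(l / real (n ^ 9))*((C + l) * real n ^ 6 / 2 + K)
        + 2*(l / real (n ^ 9))*(3*(C + K) + 2*pi) + 8*\<delta>*l) pos wt"
    using atomic_approx_phase[OF _ winding energy_le L1 \<delta> cells Q] n by auto
  moreover have "2*(l / real (n ^ 9))*((C + l) * real n ^ 6 / 2 + K)
        + 2*(l / real (n ^ 9))*(3*(C + K) + 2*pi) + 8*\<delta>*l
      \<le> (l*(C + l) + 2*l*K + 2*l*(3*(C + K) + 2*pi) + l) / real n"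
    unfolding \<delta>_def by (rule scaled_error_le[OF n(1) l C \<open>0 \<le> K\<close>])
  ultimately show ?thesis using atomic_approx_mono by blast
qed

lemma atomic_approx_sequence:
  assumes l: "0 < l" and C: "0 < C"
    and curv: "curvature_of l dg k" "\<forall>e\<in>{0<..1}. curvature_of l (de e) (ke e)"
    and closed: "dg 0 = dg l" "\<forall>e\<in>{0<..1}. de e 0 = de e l"
    and ke2: "\<forall>e\<in>{0<..1}. (\<lambda>s. (ke e s)\<^sup>2) integrable_on {0..l}"
    and bound1: "\<forall>e\<in>{0<..1}. sqrt e * integral {0..l} (\<lambda>s. (ke e s)\<^sup>2) \<le> C"
    and bound2: "\<forall>e\<in>{0<..1}. integral {0..l} (\<lambda>s. (norm (de e s - dg s))\<^sup>2) \<le> C * sqrt e"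
  shows "\<exists>eps Q err pos wt. (\<forall>n. eps n \<in> {0<..1}) \<and> eps \<longlonglongrightarrow> 0 \<and> err \<longlonglongrightarrow> 0 \<and>
           (\<forall>n. atomic_approx l (\<lambda>s. ke (eps n) s - k s) Q (err n) (pos n) (wt n))"
proof -
  define K where "K = integral {0..l} (\<lambda>s. \<bar>k s\<bar>)"
  define Err where "Err = l*(C + l) + 2*l*K + 2*l*(3*(C + K) + 2*pi) + l"
  define n0 where "n0 = nat \<lceil>16 * C / l\<rceil> + 1"
  define eps where "eps n = 1 / real (n + n0) ^ 24" for n
  have eps: "eps n \<in> {0<..1}" "sqrt (eps n) = 1 / real (n + n0) ^ 12" for n
    using real_sqrt_unique[of "1 / real (n + n0) ^ 12" "eps n"]
    by (auto simp: eps_def n0_def power_divide power_mult[symmetric])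
  have "\<exists>pos wt. atomic_approx l (\<lambda>s. ke (eps n) s - k s) (nat \<lceil>C + K\<rceil> + 2)
                  (Err / real (n + n0)) pos wt" for n
  proof -
    have "16 * C / l < real (n + n0)" unfolding n0_def by linarith
    then have "16 * C < l * real (n + n0)" using l by (simp add: field_simps)
    moreover note e = eps(1)[of n]
    ultimately show ?thesis
      unfolding Err_def K_def
      using atomic_approx_curvature_diff[OF l C _ _ curv(1) bspec[OF curv(2) e] closed(1)
          bspec[OF closed(2) e] bspec[OF ke2 e] eps(2) bspec[OF bound1 e] bspec[OF bound2 e]]
      by (simp add: n0_def)
  qed
  then obtain pos wt where approx: "\<And>n. atomic_approx l (\<lambda>s. ke (eps n) s - k s)
      (nat \<lceil>C + K\<rceil> + 2) (Err / real (n + n0)) (pos n) (wt n)"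
    by metis
  have inverse_lim: "(\<lambda>n. 1 / real (n + n0)) \<longlonglongrightarrow> 0"
    using LIMSEQ_ignore_initial_segment[OF lim_1_over_n, of n0] by simp
  then have "(\<lambda>n. Err / real (n + n0)) \<longlonglongrightarrow> 0"
    using tendsto_mult_right_zero[OF inverse_lim, of Err] by simp
  moreover have "eps \<longlonglongrightarrow> 0"
    using tendsto_power[OF inverse_lim, of 24] by (simp add: eps_def[abs_def] power_one_over)
  ultimately show ?thesis using eps(1) approx by blast
qed

section \<open>Compactness\<close>

lemma convergent_subseq_finitely_many:
  fixes x :: "nat \<Rightarrow> nat \<Rightarrow> real"
  assumes bounded: "\<And>k j. \<bar>x k j\<bar> \<le> B"
  shows "\<exists>r y. strict_mono r \<and> (\<forall>j<D. (\<lambda>k. x (r k) j) \<longlonglongrightarrow> y j)"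
proof -
  have "\<forall>\<delta>\<subseteq>{..<D}. \<exists>y r. strict_mono r \<and>
      (\<forall>e>0. eventually (\<lambda>k. \<forall>j\<in>\<delta>. dist (x (r k) j) (y j) < e) sequentially)"
    by (rule compact_lemma_general[where proj = "\<lambda>x j. x j" and unproj = "\<lambda>y. y"])
      (use bounded in \<open>auto simp: bounded_iff\<close>)
  then obtain y r where r: "strict_mono r"
    and conv: "\<forall>e>0. eventually (\<lambda>k. \<forall>j\<in>{..<D}. dist (x (r k) j) (y j) < e) sequentially"
    by blast
  have "(\<lambda>k. x (r k) j) \<longlonglongrightarrow> y j" if "j < D" for j
    unfolding tendsto_iff using conv that by (auto elim!: eventually_mono)
  then show ?thesis using r by blast
qed

lemma convergent_of_int_eventually_const:
  fixes f :: "nat \<Rightarrow> int"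
  assumes "(\<lambda>k. real_of_int (f k)) \<longlonglongrightarrow> y"
  shows "\<exists>z. eventually (\<lambda>k. f k = z) sequentially"
proof -
  have "eventually (\<lambda>k. dist (real_of_int (f k)) y < 1/2) sequentially"
    using assms by (rule tendstoD) simp
  then obtain K where K: "\<And>k. k \<ge> K \<Longrightarrow> \<bar>real_of_int (f k) - y\<bar> < 1/2"
    by (auto simp: eventually_sequentially dist_real_def)
  have "f k = f K" if "k \<ge> K" for k
  proof -
    have "\<bar>real_of_int (f k) - real_of_int (f K)\<bar> < 1" using K[OF that] K[of K] by linarith
    then show ?thesis by linarith
  qed
  then show ?thesis unfolding eventually_sequentially by blast
qed

definition point_masses :: "nat \<Rightarrow> (nat \<Rightarrow> real) \<Rightarrow> (nat \<Rightarrow> int) \<Rightarrow> real \<Rightarrow> int" where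
  "point_masses Q y z x = (\<Sum>j | j < Q \<and> y j = x. z j)"

lemma point_masses_support: "{x. point_masses Q y z x \<noteq> 0} \<subseteq> y ` {..<Q}"
proof
  fix x assume x: "x \<in> {x. point_masses Q y z x \<noteq> 0}"
  show "x \<in> y ` {..<Q}"
  proof (rule ccontr)
    assume "x \<notin> y ` {..<Q}"
    then have "{j. j < Q \<and> y j = x} = {}" by auto
    then have "point_masses Q y z x = 0" unfolding point_masses_def by (simp only: sum.empty)
    then show False using x by simp
  qed
qed

lemma point_masses_in_Mfin_Z: "\<forall>j<Q. y j \<in> {0..l} \<Longrightarrow> point_masses Q y z \<in> Mfin_Z l"
  using point_masses_support[of Q y z] unfolding Mfin_Z_def by (auto intro: finite_subset)

lemma point_masses_cong: "\<forall>j<Q. z j = z' j \<Longrightarrow> point_masses Q y z = point_masses Q y z'"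
  unfolding point_masses_def by (intro ext sum.cong) auto

lemma sum_point_masses:
  "(\<Sum>x\<in>{x. point_masses Q y z x \<noteq> 0}. of_int (point_masses Q y z x) * \<psi> x)
     = (\<Sum>j<Q. of_int (z j) * \<psi> (y j))"
proof -
  have "(\<Sum>j<Q. of_int (z j) * \<psi> (y j))
      = (\<Sum>x\<in>y ` {..<Q}. \<Sum>j\<in>{j. j \<in> {..<Q} \<and> y j = x}. of_int (z j) * \<psi> (y j))"
    by (rule sum.image_gen) simp
  also have "\<dots> = (\<Sum>x\<in>y ` {..<Q}. of_int (point_masses Q y z x) * \<psi> x)"
    by (intro sum.cong refl) (auto simp: point_masses_def sum_distrib_right intro!: sum.cong)
  also have "\<dots> = (\<Sum>x\<in>{x. point_masses Q y z x \<noteq> 0}. of_int (point_masses Q y z x) * \<psi> x)"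
    by (rule sum.mono_neutral_right) (use point_masses_support in auto)
  finally show ?thesis by simp
qed

lemma pairing_point_masses_le:
  assumes approx: "atomic_approx l f Q err pos z" and "0 \<le> l" and y: "\<forall>j<Q. y j \<in> {0..l}"
    and \<psi>: "flat_admissible l \<psi>"
  shows "pairing l f (\<lambda>x. - point_masses Q y z x) \<psi>
           \<le> err + 2*pi * (\<Sum>j<Q. \<bar>real_of_int (z j)\<bar> * \<bar>pos j - y j\<bar>)"
proof -
  define I where "I = integral {0..l} (\<lambda>s. \<psi> s * f s)"
  have lip: "1-lipschitz_on {0..l} \<psi>" by (rule flat_admissible_lipschitz[OF \<psi> \<open>0 \<le> l\<close>])
  have "pairing l f (\<lambda>x. - point_masses Q y z x) \<psi> = I - 2*pi * (\<Sum>j<Q. of_int (z j) * \<psi> (y j))"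
    using sum_point_masses[of Q y z \<psi>] by (simp add: pairing_def I_def sum_negf)
  also have "\<dots> = (I - 2*pi * (\<Sum>j<Q. of_int (z j) * \<psi> (pos j)))
      + 2*pi * (\<Sum>j<Q. of_int (z j) * (\<psi> (pos j) - \<psi> (y j)))"
    by (simp add: algebra_simps sum_subtractf)
  also have "\<dots> \<le> err + 2*pi * (\<Sum>j<Q. \<bar>real_of_int (z j)\<bar> * \<bar>pos j - y j\<bar>)"
  proof (rule add_mono)
    show "I - 2*pi * (\<Sum>j<Q. of_int (z j) * \<psi> (pos j)) \<le> err"
      using approx \<psi> unfolding atomic_approx_def I_def by fastforce
    have "of_int (z j) * (\<psi> (pos j) - \<psi> (y j)) \<le> \<bar>real_of_int (z j)\<bar> * \<bar>pos j - y j\<bar>"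
      if "j < Q" for j
    proof -
      have "\<bar>\<psi> (pos j) - \<psi> (y j)\<bar> \<le> \<bar>pos j - y j\<bar>"
        using lipschitz_onD[OF lip, of "pos j" "y j"] approx y that
        by (auto simp: atomic_approx_def dist_real_def)
      then have "\<bar>of_int (z j) * (\<psi> (pos j) - \<psi> (y j))\<bar> \<le> \<bar>real_of_int (z j)\<bar> * \<bar>pos j - y j\<bar>"
        unfolding abs_mult by (intro mult_left_mono) auto
      then show ?thesis by linarith
    qed
    then show "2*pi * (\<Sum>j<Q. of_int (z j) * (\<psi> (pos j) - \<psi> (y j)))
        \<le> 2*pi * (\<Sum>j<Q. \<bar>real_of_int (z j)\<bar> * \<bar>pos j - y j\<bar>)"
      by (intro mult_left_mono sum_mono) auto
  qed
  finally show ?thesis .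
qed

lemma flat_norm_point_masses_le:
  assumes "atomic_approx l f Q err pos z" "0 \<le> l" "\<forall>j<Q. y j \<in> {0..l}"
  shows "0 \<le> flat_norm l f (\<lambda>x. - point_masses Q y z x)"
    and "flat_norm l f (\<lambda>x. - point_masses Q y z x)
           \<le> err + 2*pi * (\<Sum>j<Q. \<bar>real_of_int (z j)\<bar> * \<bar>pos j - y j\<bar>)"
  using flat_norm_bounds[OF pairing_point_masses_le[OF assms]] by blast+

lemma convergent_atoms_subseq:
  fixes pos :: "nat \<Rightarrow> nat \<Rightarrow> real" and wt :: "nat \<Rightarrow> nat \<Rightarrow> int"
  assumes pos: "\<And>n j. j < Q \<Longrightarrow> pos n j \<in> {a..b}" and wt: "\<And>n j. j < Q \<Longrightarrow> \<bar>wt n j\<bar> \<le> B"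
  shows "\<exists>r y z. strict_mono r \<and> (\<forall>j<Q. y j \<in> {a..b} \<and> (\<lambda>k. pos (r k) j) \<longlonglongrightarrow> y j) \<and>
           eventually (\<lambda>k. \<forall>j\<in>{..<Q}. wt (r k) j = z j) sequentially"
proof -
  define x where
    "x n j = (if j < Q then pos n j else if j < 2*Q then real_of_int (wt n (j - Q)) else 0)" for n j
  have "\<bar>x n j\<bar> \<le> \<bar>a\<bar> + \<bar>b\<bar> + \<bar>real_of_int B\<bar>" for n j
  proof (cases "j < Q")
    case True
    then show ?thesis using pos[of j n] by (auto simp: x_def)
  next
    case False
    have "real_of_int \<bar>wt n (j - Q)\<bar> \<le> real_of_int B" if "j < 2*Q"
      using wt[of "j - Q" n] that False by (simp only: of_int_le_iff)
    then show ?thesis using False by (auto simp: x_def)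
  qed
  then obtain r y where r: "strict_mono r" and lim: "\<forall>j<2*Q. (\<lambda>k. x (r k) j) \<longlonglongrightarrow> y j"
    using convergent_subseq_finitely_many by blast
  have lim_pos: "(\<lambda>k. pos (r k) j) \<longlonglongrightarrow> y j" if "j < Q" for j
    using lim[rule_format, of j] that by (simp add: x_def)
  have "y j \<in> {a..b}" if "j < Q" for j
  proof -
    have "a \<le> y j" by (rule LIMSEQ_le_const[OF lim_pos[OF that]]) (use pos that in auto)
    moreover have "y j \<le> b" by (rule LIMSEQ_le_const2[OF lim_pos[OF that]]) (use pos that in auto)
    ultimately show ?thesis by simp
  qed
  moreover have "\<exists>zj. eventually (\<lambda>k. wt (r k) j = zj) sequentially" if "j < Q" for j
  proof (rule convergent_of_int_eventually_const)
    show "(\<lambda>k. real_of_int (wt (r k) j)) \<longlonglongrightarrow> y (Q + j)"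
      using lim[rule_format, of "Q + j"] that by (simp add: x_def)
  qed
  then obtain z where "\<And>j. j < Q \<Longrightarrow> eventually (\<lambda>k. wt (r k) j = z j) sequentially"
    by metis
  then have "eventually (\<lambda>k. \<forall>j\<in>{..<Q}. wt (r k) j = z j) sequentially"
    by (intro eventually_ball_finite) auto
  ultimately show ?thesis using r lim_pos by blast
qed

lemma flat_convergent_subseq_of_atomic_approx:
  assumes approx: "\<And>n. atomic_approx l (f n) Q (err n) (pos n) (wt n)"
    and err: "err \<longlonglongrightarrow> 0" and "0 \<le> l"
  shows "\<exists>r. \<exists>c\<in>Mfin_Z l. strict_mono r \<and> (\<lambda>k. flat_norm l (f (r k)) (\<lambda>x. - c x)) \<longlonglongrightarrow> 0"
proof -
  have "pos n j \<in> {0..l}" "\<bar>wt n j\<bar> \<le> int Q" if "j < Q" for n j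
    using approx[of n] that by (auto simp: atomic_approx_def)
  then obtain r y z where r: "strict_mono r" and y: "\<forall>j<Q. y j \<in> {0..l}"
    and lim_pos: "\<forall>j<Q. (\<lambda>k. pos (r k) j) \<longlonglongrightarrow> y j"
    and wt_eq: "eventually (\<lambda>k. \<forall>j\<in>{..<Q}. wt (r k) j = z j) sequentially"
    using convergent_atoms_subseq[of Q pos 0 l wt "int Q"] by blast
  define \<beta> where "\<beta> k = err (r k) + 2*pi * (\<Sum>j<Q. \<bar>real_of_int (z j)\<bar> * \<bar>pos (r k) j - y j\<bar>)" for k
  have "(\<lambda>k. \<bar>pos (r k) j - y j\<bar>) \<longlonglongrightarrow> 0" if "j < Q" for j
    using lim_pos that by (intro tendsto_rabs_zero LIM_zero) auto
  then have "(\<lambda>k. \<Sum>j<Q. \<bar>real_of_int (z j)\<bar> * \<bar>pos (r k) j - y j\<bar>) \<longlonglongrightarrow> 0"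
    by (intro tendsto_null_sum tendsto_mult_right_zero) auto
  moreover have "(\<lambda>k. err (r k)) \<longlonglongrightarrow> 0"
    using LIMSEQ_subseq_LIMSEQ[OF err r] by (simp add: comp_def)
  ultimately have \<beta>: "\<beta> \<longlonglongrightarrow> 0"
    unfolding \<beta>_def using tendsto_add_zero tendsto_mult_right_zero by blast
  have "eventually (\<lambda>k. 0 \<le> flat_norm l (f (r k)) (\<lambda>x. - point_masses Q y z x) \<and>
      flat_norm l (f (r k)) (\<lambda>x. - point_masses Q y z x) \<le> \<beta> k) sequentially"
    using wt_eq
  proof eventually_elim
    case (elim k)
    then have "point_masses Q y z = point_masses Q y (wt (r k))"
      by (intro point_masses_cong) auto
    then show ?case
      using flat_norm_point_masses_le[OF approx[of "r k"] \<open>0 \<le> l\<close> y] elim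
      by (simp add: \<beta>_def)
  qed
  then have "(\<lambda>k. flat_norm l (f (r k)) (\<lambda>x. - point_masses Q y z x)) \<longlonglongrightarrow> 0"
    by (intro tendsto_sandwich[OF _ _ tendsto_const \<beta>]) (auto elim: eventually_mono)
  then show ?thesis using r point_masses_in_Mfin_Z[OF y] by blast
qed

theorem proposition6p3:
  fixes l C :: real
    and gamma dgamma ddgamma :: "real \<Rightarrow> real^2" and kappa :: "real \<Rightarrow> real"
    and gammae dgammae :: "real \<Rightarrow> real \<Rightarrow> real^2" and kappae :: "real \<Rightarrow> real \<Rightarrow> real"
  assumes l_pos: "l > 0"
    and gamma_d1: "\<forall>s\<in>{0..l}. (gamma has_vector_derivative dgamma s) (at s within {0..l})"
    and gamma_d2: "\<forall>s\<in>{0..l}. (dgamma has_vector_derivative ddgamma s) (at s within {0..l})"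
    and gamma_C2: "continuous_on {0..l} ddgamma"
    and gamma_unit: "\<forall>s\<in>{0..l}. norm (dgamma s) = 1"
    and gamma_closed: "gamma 0 = gamma l" "dgamma 0 = dgamma l" "ddgamma 0 = ddgamma l"
    and gamma_curv: "curvature_of l dgamma kappa"
    and ge_d1: "\<forall>e\<in>{0<..1}. \<forall>s\<in>{0..l}.
                  (gammae e has_vector_derivative dgammae e s) (at s within {0..l})"
    and ge_closed: "\<forall>e\<in>{0<..1}. gammae e 0 = gammae e l \<and> dgammae e 0 = dgammae e l"
    and ge_curv: "\<forall>e\<in>{0<..1}. curvature_of l (dgammae e) (kappae e)"
    and ge_H2: "\<forall>e\<in>{0<..1}. (\<lambda>s. (kappae e s)^2) integrable_on {0..l}"
    and C_pos: "C > 0"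
    and bound1: "\<forall>e\<in>{0<..1}. sqrt e * integral {0..l} (\<lambda>s. (kappae e s)^2) \<le> C"
    and bound2: "\<forall>e\<in>{0<..1}.
                   integral {0..l} (\<lambda>s. (norm (dgammae e s - dgamma s))^2) \<le> C * sqrt e"
  shows "\<exists>eps :: nat \<Rightarrow> real. \<exists>c \<in> Mfin_Z l.
           (\<forall>k. eps k \<in> {0<..1}) \<and> eps \<longlonglongrightarrow> 0 \<and>
           (\<lambda>k. flat_norm l (\<lambda>s. kappae (eps k) s - kappa s) (\<lambda>x. - c x)) \<longlonglongrightarrow> 0"
proof -
  have "\<forall>e\<in>{0<..1}. dgammae e 0 = dgammae e l" using ge_closed by blast
  then obtain eps Q err pos wt where eps: "\<forall>n. eps n \<in> {0<..1}" "eps \<longlonglongrightarrow> 0"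
    and err: "err \<longlonglongrightarrow> 0"
    and approx: "\<And>n. atomic_approx l (\<lambda>s. kappae (eps n) s - kappa s) Q (err n) (pos n) (wt n)"
    using atomic_approx_sequence[OF l_pos C_pos gamma_curv ge_curv gamma_closed(2) _ ge_H2 bound1 bound2]
    by blast
  obtain r c where "c \<in> Mfin_Z l" "strict_mono r"
    and "(\<lambda>k. flat_norm l (\<lambda>s. kappae (eps (r k)) s - kappa s) (\<lambda>x. - c x)) \<longlonglongrightarrow> 0"
    using flat_convergent_subseq_of_atomic_approx[OF approx err] l_pos by auto
  moreover have "(eps \<circ> r) \<longlonglongrightarrow> 0" using LIMSEQ_subseq_LIMSEQ[OF eps(2) \<open>strict_mono r\<close>] .
  ultimately show ?thesis using eps(1) by (intro exI[of _ "eps \<circ> r"] bexI) auto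
qed

end
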